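(* Let $\{X_n,n\geq1\}$ be a $\varphi$-mixing sequence of random variables with common marginal distribution function $F$, whose mixing coefficients satisfy $\varphi(n)=O(n^{-3})$. Fix $p\in(0,1)$ and let $\xi_p=F^{-1}(p)=\inf\{x:F(x)\geq p\}$. Assume that $F$ possesses a positive continuous density $f$ in a neighborhood $\mathscr{N}_p$ of $\xi_p$ such that $0<d=\sup\{f(x):x\in\mathscr{N}_p\}<\infty$. Let $C_0>0$ be a constant, let $a_n\sim C_0 n^{-1/2}(\log n)^{3/4}$ (i.e. $a_n/(C_0n^{-1/2}(\log n)^{3/4})\to1$), let $\mathscr{D}_n=[\xi_p-a_n,\xi_p+a_n]$ and $$H_{p,n}=\sup_{x\in\mathscr{D}_n}\big|(F_n(x)-F(x))-(F_n(\xi_p)-p)\big|.$$ Then with probability 1, $$H_{p,n}\leq (d+4C_3)\,n^{-3/4}\log n\quad\text{for all } n \text{ sufficiently large},$$ where $C_3=4\big[1+4\sum_{n=1}^\infty\varphi^{1/2}(n)\big]$.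
   Context: All random variables are defined on a probability space $(\Omega,\mathcal{F},P)$. $F_n(x)=\frac1n\sum_{i=1}^n I(X_i\leq x)$ is the empirical distribution function of $X_1,\dots,X_n$. For $n\leq m$ let $\mathcal{F}_n^m=\sigma(X_i,n\leq i\leq m)$. For sub-$\sigma$-algebras $\mathcal{B},\mathcal{R}$ let $\varphi(\mathcal{B},\mathcal{R})=\sup_{A\in\mathcal{B},B\in\mathcal{R},P(A)>0}|P(B\mid A)-P(B)|$, and the mixing coefficients are $\varphi(n)=\sup_{k\geq1}\varphi(\mathcal{F}_1^k,\mathcal{F}_{k+n}^\infty)$. The sequence is called $\varphi$-mixing if $\varphi(n)\downarrow0$ as $n\to\infty$. *)

theory Defs
  imports "HOL-Probability.Probability" "HOL-Library.Landau_Symbols"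
begin

definition gen_sigma :: "'a measure \<Rightarrow> (nat \<Rightarrow> 'a \<Rightarrow> real) \<Rightarrow> nat set \<Rightarrow> 'a set set" where
  "gen_sigma M X I = sigma_sets (space M)
     (\<Union>i\<in>I. {X i -` B \<inter> space M | B. B \<in> sets borel})"

definition phi_sig :: "'a measure \<Rightarrow> 'a set set \<Rightarrow> 'a set set \<Rightarrow> real" where
  "phi_sig M \<A> \<B> = Sup {\<bar>measure M (A \<inter> B) / measure M A - measure M B\<bar> | A B.
      A \<in> \<A> \<and> B \<in> \<B> \<and> measure M A > 0}"

definition phi_mix :: "'a measure \<Rightarrow> (nat \<Rightarrow> 'a \<Rightarrow> real) \<Rightarrow> nat \<Rightarrow> real" where
  "phi_mix M X n = (SUP k\<in>{1..}. phi_sig M (gen_sigma M X {1..k}) (gen_sigma M X {k+n..}))"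

definition emp_df :: "(nat \<Rightarrow> 'a \<Rightarrow> real) \<Rightarrow> nat \<Rightarrow> 'a \<Rightarrow> real \<Rightarrow> real" where
  "emp_df X n \<omega> x = (1 / real n) * (\<Sum>i=1..n. if X i \<omega> \<le> x then 1 else 0)"

end

theory Submission
  imports Defs "HOL-Real_Asymp.Real_Asymp"
begin

(* Up to the factor 1/n, the deviation G_n(x) = (F_n(x) - F(x)) - (F_n(xi_p) - p) is a centred
   sum of indicators of the interval between x and xi_p, whose probability is at most d a_n.
   Cut 1..n into blocks of length m ~ n^(1/4) and treat even and odd blocks separately: by
   phi-mixing the exponential moment of a sum over non-adjacent blocks factorises up to an
   additive error e phi(m + 1) per block, and the exponential moment of a single block is
   controlled by its variance, at most (1 + 2 sum_k phi(k)) m times the interval probability.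
   This gives P(|n G_n(x)| >= 16 n^(1/4) log n) = O(n^-3) uniformly for x in D_n.  A grid of
   mesh n^(-3/4) on D_n has O(n) points, so by Borel-Cantelli almost surely, for all large n,
   |G_n| <= 16 n^(-3/4) log n on the grid; monotonicity of F_n and F and the bound f <= d
   interpolate between neighbouring grid points at the cost d n^(-3/4). *)

lemma exp_le_1_add_square:
  fixes y :: real
  assumes "\<bar>y\<bar> \<le> 1"
  shows "exp y \<le> 1 + y + y\<^sup>2"
proof (cases "0 \<le> y")
  case True
  then show ?thesis using assms exp_bound by auto
next
  case False
  define x where "x = - y"
  have x: "0 \<le> x" "x \<le> 1" using False assms x_def by auto
  have "1 \<le> (1 - x + x\<^sup>2) * (1 + x + x\<^sup>2 / 2)"
  proof -
    have "(1 - x + x\<^sup>2) * (1 + x + x\<^sup>2 / 2) = 1 + x\<^sup>2 / 2 + x ^ 3 / 2 + x ^ 4 / 2"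
      by (simp add: field_simps eval_nat_numeral)
    then show ?thesis using x by simp
  qed
  also have "\<dots> \<le> (1 - x + x\<^sup>2) * exp x"
  proof (rule mult_left_mono)
    show "1 + x + x\<^sup>2 / 2 \<le> exp x" using exp_lower_Taylor_quadratic x(1) by blast
    show "0 \<le> 1 - x + x\<^sup>2" using x by (simp add: power2_eq_square)
  qed
  finally have "exp (- x) \<le> 1 - x + x\<^sup>2" by (simp add: exp_minus field_simps)
  then show ?thesis using x_def by simp
qed

lemma nn_integral_layer_cake_weighted:
  fixes f :: "'a \<Rightarrow> real" and w :: "'a \<Rightarrow> ennreal"
  assumes "sigma_finite_measure M"
    and [measurable]: "f \<in> borel_measurable M" "w \<in> borel_measurable M"
    and nonneg: "\<And>x. x \<in> space M \<Longrightarrow> 0 \<le> f x"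
  shows "(\<integral>\<^sup>+x. w x * ennreal (f x) \<partial>M) =
    (\<integral>\<^sup>+t. indicator {0..} t * (\<integral>\<^sup>+x. w x * indicator {x\<in>space M. t < f x} x \<partial>M) \<partial>lborel)"
proof -
  interpret pair_sigma_finite M lborel
    using assms(1) lborel.sigma_finite_measure_axioms by (rule pair_sigma_finite.intro)
  have "(\<integral>\<^sup>+x. w x * ennreal (f x) \<partial>M) = (\<integral>\<^sup>+x. (\<integral>\<^sup>+t. w x * indicator {0..<f x} t \<partial>lborel) \<partial>M)"
    using nonneg by (intro nn_integral_cong) (simp add: nn_integral_cmult)
  also have "\<dots> = (\<integral>\<^sup>+t. (\<integral>\<^sup>+x. w x * indicator {0..<f x} t \<partial>M) \<partial>lborel)"
    by (rule Fubini'[symmetric]) (simp only: indicator_def atLeastLessThan_iff split_beta, measurable)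
  also have "\<dots> = (\<integral>\<^sup>+t. indicator {0..} t * (\<integral>\<^sup>+x. w x * indicator {x\<in>space M. t < f x} x \<partial>M) \<partial>lborel)"
  proof (rule nn_integral_cong)
    fix t :: real
    have "(\<integral>\<^sup>+x. w x * indicator {0..<f x} t \<partial>M)
        = (\<integral>\<^sup>+x. indicator {0..} t * (w x * indicator {x\<in>space M. t < f x} x) \<partial>M)"
      by (rule nn_integral_cong) (auto simp: indicator_def)
    also have "\<dots> = indicator {0..} t * (\<integral>\<^sup>+x. w x * indicator {x\<in>space M. t < f x} x \<partial>M)"
      by (rule nn_integral_cmult) measurable
    finally show "(\<integral>\<^sup>+x. w x * indicator {0..<f x} t \<partial>M)
        = indicator {0..} t * (\<integral>\<^sup>+x. w x * indicator {x\<in>space M. t < f x} x \<partial>M)" .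
  qed
  finally show ?thesis .
qed

definition gen_measure :: "'a measure \<Rightarrow> (nat \<Rightarrow> 'a \<Rightarrow> real) \<Rightarrow> nat set \<Rightarrow> 'a measure" where
  "gen_measure M X I = sigma (space M) (\<Union>i\<in>I. {X i -` B \<inter> space M | B. B \<in> sets borel})"

locale real_rv_seq = prob_space M for M :: "'a measure" +
  fixes X :: "nat \<Rightarrow> 'a \<Rightarrow> real"
  assumes random_variable_X: "\<And>i. 1 \<le> i \<Longrightarrow> X i \<in> borel_measurable M"
begin

lemma gen_sigma_subset_sets:
  assumes "I \<subseteq> {1..}"
  shows "gen_sigma M X I \<subseteq> sets M"
proof -
  have "(\<Union>i\<in>I. {X i -` B \<inter> space M | B. B \<in> sets borel}) \<subseteq> sets M"
    using assms measurable_sets[OF random_variable_X] by fastforce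
  then show ?thesis unfolding gen_sigma_def by (simp add: sigma_sets_le_sets_iff)
qed

lemma sets_gen_measure: "sets (gen_measure M X I) = gen_sigma M X I"
  unfolding gen_measure_def gen_sigma_def by (rule sets_measure_of) auto

lemma space_gen_measure [simp]: "space (gen_measure M X I) = space M"
  unfolding gen_measure_def by (rule space_measure_of) auto

lemma vimage_in_gen_sigma: "i \<in> I \<Longrightarrow> B \<in> sets borel \<Longrightarrow> X i -` B \<inter> space M \<in> gen_sigma M X I"
  unfolding gen_sigma_def by (rule sigma_sets.Basic) blast

lemma measurable_X_gen_measure: "i \<in> I \<Longrightarrow> X i \<in> borel_measurable (gen_measure M X I)"
  using vimage_in_gen_sigma by (intro measurableI) (auto simp: sets_gen_measure)

lemma borel_measurable_gen_measureD:
  fixes f :: "'a \<Rightarrow> real"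
  assumes "I \<subseteq> {1..}" "f \<in> borel_measurable (gen_measure M X I)"
  shows "f \<in> borel_measurable M"
  using measurable_sets[OF assms(2)] gen_sigma_subset_sets[OF assms(1)]
  by (intro measurableI) (auto simp: sets_gen_measure)

lemma superlevel_set_in_gen_sigma:
  fixes f :: "'a \<Rightarrow> real"
  assumes "f \<in> borel_measurable (gen_measure M X I)"
  shows "{x\<in>space M. t < f x} \<in> gen_sigma M X I"
proof -
  have "f -` {t<..} \<inter> space (gen_measure M X I) \<in> sets (gen_measure M X I)"
    by (intro measurable_sets[OF assms]) simp
  moreover have "f -` {t<..} \<inter> space (gen_measure M X I) = {x\<in>space M. t < f x}" by auto
  ultimately show ?thesis by (simp add: sets_gen_measure)
qed

lemma abs_cond_prob_diff_le_1:
  assumes "A \<in> sets M" "B \<in> sets M"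
  shows "\<bar>prob (A \<inter> B) / prob A - prob B\<bar> \<le> 1"
proof -
  have "prob (A \<inter> B) \<le> prob A" using assms by (intro finite_measure_mono) auto
  then have "prob (A \<inter> B) / prob A \<le> 1"
    using measure_nonneg[of M A] by (auto simp: divide_le_eq_1 less_le)
  moreover have "0 \<le> prob (A \<inter> B) / prob A" "0 \<le> prob B" "prob B \<le> 1" by simp_all
  ultimately show ?thesis unfolding abs_le_iff by linarith
qed

lemma
  assumes "I \<subseteq> {1..}" "J \<subseteq> {1..}"
  shows phi_sig_le_1: "phi_sig M (gen_sigma M X I) (gen_sigma M X J) \<le> 1"
    and phi_sig_ge: "\<And>A B. A \<in> gen_sigma M X I \<Longrightarrow> B \<in> gen_sigma M X J \<Longrightarrow> 0 < prob A \<Longrightarrow>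
        \<bar>prob (A \<inter> B) / prob A - prob B\<bar> \<le> phi_sig M (gen_sigma M X I) (gen_sigma M X J)"
proof -
  let ?S = "{\<bar>prob (A \<inter> B) / prob A - prob B\<bar> | A B.
      A \<in> gen_sigma M X I \<and> B \<in> gen_sigma M X J \<and> 0 < prob A}"
  have "0 \<in> ?S"
    unfolding mem_Collect_eq gen_sigma_def
    by (intro exI[of _ "space M"]) (simp add: prob_space sigma_sets_top)
  then have "?S \<noteq> {}" by blast
  moreover have le_1: "\<forall>s\<in>?S. s \<le> 1"
    using gen_sigma_subset_sets[OF assms(1)] gen_sigma_subset_sets[OF assms(2)] abs_cond_prob_diff_le_1
    by blast
  ultimately show "phi_sig M (gen_sigma M X I) (gen_sigma M X J) \<le> 1"
    unfolding phi_sig_def by (intro cSup_least) auto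
  show "\<bar>prob (A \<inter> B) / prob A - prob B\<bar> \<le> phi_sig M (gen_sigma M X I) (gen_sigma M X J)"
    if "A \<in> gen_sigma M X I" "B \<in> gen_sigma M X J" "0 < prob A" for A B
    unfolding phi_sig_def using le_1 that by (intro cSup_upper bdd_aboveI[where M=1]) auto
qed

lemma phi_sig_le_phi_mix:
  assumes "1 \<le> k"
  shows "phi_sig M (gen_sigma M X {1..k}) (gen_sigma M X {k+n..}) \<le> phi_mix M X n"
  unfolding phi_mix_def using assms phi_sig_le_1
  by (intro cSUP_upper bdd_aboveI2[where M=1]) auto

lemma phi_mix_nonneg: "0 \<le> phi_mix M X n"
proof -
  have "\<bar>prob (space M \<inter> space M) / prob (space M) - prob (space M)\<bar>
      \<le> phi_sig M (gen_sigma M X {1..1}) (gen_sigma M X {1+n..})"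
    by (intro phi_sig_ge) (auto simp: gen_sigma_def prob_space intro: sigma_sets_top)
  also have "\<dots> \<le> phi_mix M X n" by (rule phi_sig_le_phi_mix) simp
  finally show ?thesis by (simp add: prob_space)
qed

lemma mixing_measure_Int:
  assumes "1 \<le> k" "A \<in> gen_sigma M X {1..k}" "B \<in> gen_sigma M X {k+n..}"
  shows "\<bar>prob (A \<inter> B) - prob A * prob B\<bar> \<le> phi_mix M X n * prob A"
proof (cases "prob A = 0")
  case True
  have "A \<in> sets M" "B \<in> sets M"
    using assms gen_sigma_subset_sets[of "{1..k}"] gen_sigma_subset_sets[of "{k+n..}"] by auto
  then have "prob (A \<inter> B) \<le> prob A" by (intro finite_measure_mono) auto
  then show ?thesis using True by simp
next
  case False
  then have pos: "0 < prob A" by (simp add: zero_less_measure_iff)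
  have "{1..k} \<subseteq> {1..}" "{k+n..} \<subseteq> {1..}" using assms(1) by auto
  then have "\<bar>prob (A \<inter> B) / prob A - prob B\<bar> \<le> phi_mix M X n"
    using phi_sig_ge[OF _ _ assms(2,3) pos] phi_sig_le_phi_mix[OF assms(1), of n] by force
  then have "\<bar>prob (A \<inter> B) / prob A - prob B\<bar> * prob A \<le> phi_mix M X n * prob A"
    using pos by (intro mult_right_mono) auto
  also have "\<bar>prob (A \<inter> B) / prob A - prob B\<bar> * prob A = \<bar>prob (A \<inter> B) - prob A * prob B\<bar>"
    using pos by (simp add: abs_mult[symmetric] field_simps)
  finally show ?thesis .
qed

lemma mixing_nn_integral_indicator:
  fixes g :: "'a \<Rightarrow> real"
  assumes k: "1 \<le> k" and A: "A \<in> gen_sigma M X {1..k}"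
    and g: "g \<in> borel_measurable (gen_measure M X {k+n..})"
      "\<And>\<omega>. \<omega> \<in> space M \<Longrightarrow> 0 \<le> g \<omega>" "\<And>\<omega>. \<omega> \<in> space M \<Longrightarrow> g \<omega> \<le> K"
  shows "(\<integral>\<^sup>+x. indicator A x * ennreal (g x) \<partial>M)
    \<le> ennreal (prob A) * ((\<integral>\<^sup>+x. ennreal (g x) \<partial>M) + ennreal (phi_mix M X n * K))"
proof -
  have [measurable]: "g \<in> borel_measurable M" "A \<in> sets M"
    using borel_measurable_gen_measureD[OF _ g(1)] gen_sigma_subset_sets[of "{1..k}"] A k by auto
  obtain \<omega> where "\<omega> \<in> space M" using not_empty by blast
  then have K: "0 \<le> K" using g(2,3) by force
  have phi: "0 \<le> phi_mix M X n" by (rule phi_mix_nonneg)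
  let ?L = "\<lambda>t. {x\<in>space M. t < g x}"
  have "(\<integral>\<^sup>+x. indicator A x * ennreal (g x) \<partial>M)
      = (\<integral>\<^sup>+t. indicator {0..} t * emeasure M (A \<inter> ?L t) \<partial>lborel)"
    using g(2) by (subst nn_integral_layer_cake_weighted)
      (auto intro!: nn_integral_cong simp: sigma_finite_measure_axioms indicator_inter_arith[symmetric])
  also have "\<dots> \<le> (\<integral>\<^sup>+t. ennreal (prob A) * (indicator {0..} t * emeasure M (?L t))
      + ennreal (prob A * phi_mix M X n) * indicator {0..<K} t \<partial>lborel)"
  proof (intro nn_integral_mono)
    fix t :: real
    have "prob (A \<inter> ?L t) \<le> prob A * prob (?L t) + phi_mix M X n * prob A"
      using mixing_measure_Int[OF k A superlevel_set_in_gen_sigma[OF g(1), of t]] by linarith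
    then have "emeasure M (A \<inter> ?L t)
        \<le> ennreal (prob A) * emeasure M (?L t) + ennreal (prob A * phi_mix M X n)"
      using phi by (simp add: emeasure_eq_measure ennreal_mult[symmetric] ennreal_plus[symmetric]
          mult.commute del: ennreal_plus)
    moreover have "A \<inter> ?L t = {}" if "K \<le> t" using g(3) that by force
    ultimately show "indicator {0..} t * emeasure M (A \<inter> ?L t)
        \<le> ennreal (prob A) * (indicator {0..} t * emeasure M (?L t))
          + ennreal (prob A * phi_mix M X n) * indicator {0..<K} t"
      by (cases "0 \<le> t"; cases "t < K") auto
  qed
  also have "\<dots> = ennreal (prob A) * (\<integral>\<^sup>+t. indicator {0..} t * emeasure M (?L t) \<partial>lborel)
      + ennreal (prob A * phi_mix M X n) * ennreal K"
    using K by (subst nn_integral_add) (auto simp: nn_integral_cmult)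
  also have "(\<integral>\<^sup>+t. indicator {0..} t * emeasure M (?L t) \<partial>lborel) = (\<integral>\<^sup>+x. ennreal (g x) \<partial>M)"
    using nn_integral_layer_cake_weighted[OF sigma_finite_measure_axioms, of g "\<lambda>_. 1"] g(2)
    by (simp add: nn_integral_indicator')
  finally show ?thesis
    using K phi by (simp add: distrib_left ennreal_mult[symmetric] mult.assoc)
qed

lemma mixing_nn_integral_mult:
  fixes f g :: "'a \<Rightarrow> real"
  assumes k: "1 \<le> k"
    and f: "f \<in> borel_measurable (gen_measure M X {1..k})" "\<And>\<omega>. \<omega> \<in> space M \<Longrightarrow> 0 \<le> f \<omega>"
    and g: "g \<in> borel_measurable (gen_measure M X {k+n..})"
      "\<And>\<omega>. \<omega> \<in> space M \<Longrightarrow> 0 \<le> g \<omega>" "\<And>\<omega>. \<omega> \<in> space M \<Longrightarrow> g \<omega> \<le> K"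
  shows "(\<integral>\<^sup>+x. ennreal (g x) * ennreal (f x) \<partial>M)
    \<le> (\<integral>\<^sup>+x. ennreal (f x) \<partial>M) * ((\<integral>\<^sup>+x. ennreal (g x) \<partial>M) + ennreal (phi_mix M X n * K))"
proof -
  have [measurable]: "f \<in> borel_measurable M" "g \<in> borel_measurable M"
    using borel_measurable_gen_measureD[OF _ f(1)] borel_measurable_gen_measureD[OF _ g(1)] k by auto
  let ?c = "(\<integral>\<^sup>+x. ennreal (g x) \<partial>M) + ennreal (phi_mix M X n * K)"
  let ?L = "\<lambda>t. {x\<in>space M. t < f x}"
  have "(\<integral>\<^sup>+x. ennreal (g x) * ennreal (f x) \<partial>M)
      = (\<integral>\<^sup>+t. indicator {0..} t * (\<integral>\<^sup>+x. indicator (?L t) x * ennreal (g x) \<partial>M) \<partial>lborel)"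
    using f(2) by (subst nn_integral_layer_cake_weighted)
      (auto simp: sigma_finite_measure_axioms mult.commute)
  also have "\<dots> \<le> (\<integral>\<^sup>+t. indicator {0..} t * (ennreal (prob (?L t)) * ?c) \<partial>lborel)"
    using mixing_nn_integral_indicator[OF k superlevel_set_in_gen_sigma[OF f(1)] g]
    by (intro nn_integral_mono mult_left_mono) auto
  also have "\<dots> = (\<integral>\<^sup>+t. indicator {0..} t * emeasure M (?L t) \<partial>lborel) * ?c"
    by (subst nn_integral_multc[symmetric]) (auto simp: emeasure_eq_measure mult.assoc)
  also have "(\<integral>\<^sup>+t. indicator {0..} t * emeasure M (?L t) \<partial>lborel) = (\<integral>\<^sup>+x. ennreal (f x) \<partial>M)"
    using nn_integral_layer_cake_weighted[OF sigma_finite_measure_axioms, of f "\<lambda>_. 1"] f(2)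
    by (simp add: nn_integral_indicator')
  finally show ?thesis .
qed

lemma mixing_expectation_mult:
  fixes f g :: "'a \<Rightarrow> real"
  assumes k: "1 \<le> k"
    and f: "f \<in> borel_measurable (gen_measure M X {1..k})"
      "\<And>\<omega>. \<omega> \<in> space M \<Longrightarrow> 0 \<le> f \<omega>" "\<And>\<omega>. \<omega> \<in> space M \<Longrightarrow> f \<omega> \<le> Kf"
    and g: "g \<in> borel_measurable (gen_measure M X {k+n..})"
      "\<And>\<omega>. \<omega> \<in> space M \<Longrightarrow> 0 \<le> g \<omega>" "\<And>\<omega>. \<omega> \<in> space M \<Longrightarrow> g \<omega> \<le> K"
  shows "expectation (\<lambda>\<omega>. f \<omega> * g \<omega>) \<le> expectation f * (expectation g + phi_mix M X n * K)"
proof -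
  have [measurable]: "f \<in> borel_measurable M" "g \<in> borel_measurable M"
    using borel_measurable_gen_measureD[OF _ f(1)] borel_measurable_gen_measureD[OF _ g(1)] k by auto
  obtain \<omega> where "\<omega> \<in> space M" using not_empty by blast
  then have K: "0 \<le> K" using g(2,3) by force
  have "integrable M f" using f(2,3) by (intro integrable_const_bound[where B=Kf] AE_I2) auto
  moreover have "integrable M g" using g(2,3) by (intro integrable_const_bound[where B=K] AE_I2) auto
  moreover have "integrable M (\<lambda>\<omega>. f \<omega> * g \<omega>)"
    using f(2,3) g(2,3) by (intro integrable_const_bound[where B="Kf * K"] AE_I2)
      (auto simp: abs_mult intro!: mult_mono intro: order_trans)
  moreover have "(\<integral>\<^sup>+x. ennreal (g x) * ennreal (f x) \<partial>M) = (\<integral>\<^sup>+x. ennreal (f x * g x) \<partial>M)"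
    using f(2) g(2) by (intro nn_integral_cong) (simp add: ennreal_mult mult.commute)
  ultimately have "ennreal (expectation (\<lambda>\<omega>. f \<omega> * g \<omega>))
      \<le> ennreal (expectation f) * (ennreal (expectation g) + ennreal (phi_mix M X n * K))"
    using mixing_nn_integral_mult[OF k f(1,2) g] f(2) g(2)
    by (simp add: nn_integral_eq_integral)
  then show ?thesis
    using f(2) g(2) K phi_mix_nonneg[of n]
    by (simp add: integral_nonneg ennreal_mult[symmetric] ennreal_plus[symmetric] del: ennreal_plus)
qed

end

definition count_dev :: "(nat \<Rightarrow> 'a \<Rightarrow> real) \<Rightarrow> real \<Rightarrow> real \<Rightarrow> real \<Rightarrow> nat \<Rightarrow> 'a \<Rightarrow> real" where
  "count_dev X lo hi \<nu> n \<omega> = (\<Sum>i=1..n. indicator {lo<..hi} (X i \<omega>) - \<nu>)"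

definition block :: "nat \<Rightarrow> nat \<Rightarrow> nat \<Rightarrow> nat set" where
  "block n m b = {i\<in>{1..n}. (i - 1) div m = b}"

lemma finite_block [simp]: "finite (block n m b)"
  unfolding block_def by auto

lemma block_subset_atLeast_1: "block n m b \<subseteq> {1..}"
  unfolding block_def by auto

lemma block_subset_atLeastAtMost:
  assumes "1 \<le> m"
  shows "block n m b \<subseteq> {b * m + 1..b * m + m}"
proof
  fix i assume "i \<in> block n m b"
  then have i: "1 \<le> i" "(i - 1) div m = b" unfolding block_def by auto
  have "b * m + (i - 1) mod m = i - 1" using div_mult_mod_eq[of "i - 1" m] unfolding i(2) .
  moreover have "(i - 1) mod m < m" using assms by simp
  ultimately show "i \<in> {b * m + 1..b * m + m}" using i(1) by simp linarith
qed

lemma card_block_le: "1 \<le> m \<Longrightarrow> card (block n m b) \<le> m"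
  using card_mono[OF _ block_subset_atLeastAtMost] by fastforce

lemma card_parity_blocks_le:
  assumes "1 \<le> m"
  shows "real (card {b\<in>{..n div m}. b mod 2 = r}) \<le> real n / real m + 1"
proof -
  have "card {b\<in>{..n div m}. b mod 2 = r} \<le> Suc (n div m)"
    using card_mono[of "{..n div m}" "{b\<in>{..n div m}. b mod 2 = r}"] by auto
  moreover have "real (n div m) * real m \<le> real n"
    by (metis of_nat_le_iff of_nat_mult div_times_less_eq_dividend)
  then have "real (n div m) \<le> real n / real m" using assms by (simp add: le_divide_eq)
  ultimately show ?thesis by linarith
qed

lemma sum_eq_sum_parity_blocks:
  "(\<Sum>i=1..n. h i) = (\<Sum>r<2::nat. \<Sum>b\<in>{b\<in>{..n div m}. b mod 2 = r}. \<Sum>i\<in>block n m b. h i)"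
proof -
  have "(\<Sum>i=1..n. h i) = (\<Sum>b\<in>{..n div m}. \<Sum>i\<in>block n m b. h i)"
    unfolding block_def by (rule sum.group[symmetric]) (auto intro!: div_le_mono)
  also have "\<dots> = (\<Sum>r<2::nat. \<Sum>b\<in>{b\<in>{..n div m}. b mod 2 = r}. \<Sum>i\<in>block n m b. h i)"
    by (rule sum.group[symmetric]) auto
  finally show ?thesis .
qed

lemma
  fixes \<phi> :: "nat \<Rightarrow> real"
  assumes "summable (\<lambda>k. \<phi> (Suc k))" "\<And>k. 0 \<le> \<phi> k" "finite I"
  shows sum_gaps_above_le_suminf: "(\<Sum>j\<in>{j\<in>I. i < j}. \<phi> (j - i)) \<le> (\<Sum>k. \<phi> (Suc k))"
    and sum_gaps_below_le_suminf: "(\<Sum>j\<in>{j\<in>I. j < i}. \<phi> (i - j)) \<le> (\<Sum>k. \<phi> (Suc k))"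
proof -
  have "(\<Sum>j\<in>{j\<in>I. i < j}. \<phi> (j - i)) = (\<Sum>k\<in>(\<lambda>j. j - i - 1) ` {j\<in>I. i < j}. \<phi> (Suc k))"
    by (subst sum.reindex) (auto simp: inj_on_def Suc_diff_Suc intro!: sum.cong)
  also have "\<dots> \<le> (\<Sum>k. \<phi> (Suc k))" using assms by (intro sum_le_suminf) auto
  finally show "(\<Sum>j\<in>{j\<in>I. i < j}. \<phi> (j - i)) \<le> (\<Sum>k. \<phi> (Suc k))" .
  have "(\<Sum>j\<in>{j\<in>I. j < i}. \<phi> (i - j)) = (\<Sum>k\<in>(\<lambda>j. i - j - 1) ` {j\<in>I. j < i}. \<phi> (Suc k))"
    by (subst sum.reindex) (auto simp: inj_on_def Suc_diff_Suc intro!: sum.cong)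
  also have "\<dots> \<le> (\<Sum>k. \<phi> (Suc k))" using assms by (intro sum_le_suminf) auto
  finally show "(\<Sum>j\<in>{j\<in>I. j < i}. \<phi> (i - j)) \<le> (\<Sum>k. \<phi> (Suc k))" .
qed

locale interval_hits = real_rv_seq +
  fixes lo hi \<nu> :: real
  assumes prob_hit: "\<And>i. 1 \<le> i \<Longrightarrow> prob (X i -` {lo<..hi} \<inter> space M) = \<nu>"
begin

abbreviation phi_series :: real where
  "phi_series \<equiv> \<Sum>k. phi_mix M X (Suc k)"

definition Z :: "nat \<Rightarrow> 'a \<Rightarrow> real" where
  "Z i \<omega> = indicator {lo<..hi} (X i \<omega>) - \<nu>"

lemma nu_nonneg: "0 \<le> \<nu>" and nu_le_1: "\<nu> \<le> 1"
  using prob_hit[of 1, symmetric] by simp_all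

lemma abs_Z_le_1: "\<bar>Z i \<omega>\<bar> \<le> 1"
  using nu_nonneg nu_le_1 unfolding Z_def by (simp add: indicator_def abs_le_iff)

lemma measurable_Z_gen_measure:
  assumes "i \<in> I"
  shows "Z i \<in> borel_measurable (gen_measure M X I)"
  using measurable_X_gen_measure[OF assms] unfolding Z_def[abs_def] by measurable

lemma borel_measurable_Z [measurable]: "1 \<le> i \<Longrightarrow> Z i \<in> borel_measurable M"
  by (rule borel_measurable_gen_measureD[of "{i}"]) (auto intro: measurable_Z_gen_measure)

lemma integrable_Z_mult: "1 \<le> i \<Longrightarrow> 1 \<le> j \<Longrightarrow> integrable M (\<lambda>\<omega>. Z i \<omega> * Z j \<omega>)"
  using abs_Z_le_1 by (intro integrable_const_bound[where B=1] AE_I2) (auto simp: abs_mult mult_le_one)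

lemma integrable_Z: "1 \<le> i \<Longrightarrow> integrable M (Z i)"
  using abs_Z_le_1 by (intro integrable_const_bound[where B=1] AE_I2) auto

lemma expectation_indicator_hit:
  assumes "1 \<le> i"
  shows "expectation (\<lambda>\<omega>. indicator {lo<..hi} (X i \<omega>)) = \<nu>"
proof -
  have [measurable]: "X i \<in> borel_measurable M" using assms random_variable_X by auto
  have "expectation (\<lambda>\<omega>. indicator {lo<..hi} (X i \<omega>)) =
      expectation (indicator (X i -` {lo<..hi} \<inter> space M) :: 'a \<Rightarrow> real)"
    by (intro Bochner_Integration.integral_cong) (auto split: split_indicator)
  then show ?thesis using prob_hit[OF assms] by simp
qed

lemma expectation_indicator_hit_mult:
  assumes "1 \<le> i" "1 \<le> j"
  shows "expectation (\<lambda>\<omega>. indicator {lo<..hi} (X i \<omega>) * indicator {lo<..hi} (X j \<omega>)) =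
    prob ((X i -` {lo<..hi} \<inter> space M) \<inter> (X j -` {lo<..hi} \<inter> space M))"
proof -
  have [measurable]: "X i \<in> borel_measurable M" "X j \<in> borel_measurable M"
    using assms random_variable_X by auto
  have "expectation (\<lambda>\<omega>. indicator {lo<..hi} (X i \<omega>) * indicator {lo<..hi} (X j \<omega>)) =
      expectation (indicator ((X i -` {lo<..hi} \<inter> space M) \<inter> (X j -` {lo<..hi} \<inter> space M)) :: 'a \<Rightarrow> real)"
    by (intro Bochner_Integration.integral_cong) (auto split: split_indicator)
  then show ?thesis by simp
qed

lemma integrable_indicator_hit: "1 \<le> i \<Longrightarrow> integrable M (\<lambda>\<omega>. indicator {lo<..hi} (X i \<omega>) :: real)"
  using random_variable_X by (intro integrable_const_bound[where B=1] AE_I2) (auto split: split_indicator)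

lemma expectation_Z: "1 \<le> i \<Longrightarrow> expectation (Z i) = 0"
  using expectation_indicator_hit[of i] integrable_indicator_hit[of i]
  by (simp add: Z_def[abs_def] prob_space Bochner_Integration.integral_diff)

lemma expectation_Z_mult:
  assumes "1 \<le> i" "1 \<le> j"
  shows "expectation (\<lambda>\<omega>. Z i \<omega> * Z j \<omega>) =
    prob ((X i -` {lo<..hi} \<inter> space M) \<inter> (X j -` {lo<..hi} \<inter> space M)) - \<nu> * \<nu>"
proof -
  let ?I = "\<lambda>i \<omega>. indicator {lo<..hi} (X i \<omega>) :: real"
  have "integrable M (\<lambda>\<omega>. ?I i \<omega> * ?I j \<omega>)"
    using assms random_variable_X
    by (intro integrable_const_bound[where B=1] AE_I2) (auto split: split_indicator)
  moreover have "(\<lambda>\<omega>. Z i \<omega> * Z j \<omega>) = (\<lambda>\<omega>. (?I i \<omega> * ?I j \<omega> - \<nu> * ?I i \<omega>) - (\<nu> * ?I j \<omega> - \<nu> * \<nu>))"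
    unfolding Z_def by (auto simp: algebra_simps)
  ultimately show ?thesis
    using assms integrable_indicator_hit expectation_indicator_hit expectation_indicator_hit_mult[OF assms]
    by (simp add: Bochner_Integration.integral_diff prob_space)
qed

lemma abs_expectation_Z_mult_le:
  assumes "1 \<le> i" "i < j"
  shows "\<bar>expectation (\<lambda>\<omega>. Z i \<omega> * Z j \<omega>)\<bar> \<le> phi_mix M X (j - i) * \<nu>"
proof -
  have "X i -` {lo<..hi} \<inter> space M \<in> gen_sigma M X {1..i}"
    "X j -` {lo<..hi} \<inter> space M \<in> gen_sigma M X {i + (j - i)..}"
    using assms by (auto intro!: vimage_in_gen_sigma)
  from mixing_measure_Int[OF assms(1) this] show ?thesis
    using expectation_Z_mult[of i j] prob_hit assms by simp
qed

lemma expectation_Z_square_le: "1 \<le> i \<Longrightarrow> expectation (\<lambda>\<omega>. Z i \<omega> * Z i \<omega>) \<le> \<nu>"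
  using expectation_Z_mult[of i i] prob_hit[of i] nu_le_1 nu_nonneg
  by (simp add: mult_left_le_one_le)

lemma expectation_Z_mult_le:
  assumes "1 \<le> i" "1 \<le> j"
  shows "expectation (\<lambda>\<omega>. Z i \<omega> * Z j \<omega>) \<le> \<nu> * ((if j = i then 1 else 0)
    + (if i < j then phi_mix M X (j - i) else 0) + (if j < i then phi_mix M X (i - j) else 0))"
proof -
  consider "i = j" | "i < j" | "j < i" by linarith
  then show ?thesis
  proof cases
    case 1
    then show ?thesis using expectation_Z_square_le[OF assms(1)] by simp
  next
    case 2
    then show ?thesis using abs_expectation_Z_mult_le[OF assms(1) 2] by (simp add: mult.commute)
  next
    case 3
    then show ?thesis using abs_expectation_Z_mult_le[OF assms(2) 3] by (simp add: mult.commute)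
  qed
qed

lemma sum_expectation_Z_mult_le:
  assumes sm: "summable (\<lambda>k. phi_mix M X (Suc k))" and I: "finite I" "I \<subseteq> {1..}" "i \<in> I"
  shows "(\<Sum>j\<in>I. expectation (\<lambda>\<omega>. Z i \<omega> * Z j \<omega>)) \<le> \<nu> * (1 + 2 * phi_series)"
proof -
  have "(\<Sum>j\<in>I. expectation (\<lambda>\<omega>. Z i \<omega> * Z j \<omega>)) \<le> (\<Sum>j\<in>I. \<nu> * ((if j = i then 1 else 0)
      + (if i < j then phi_mix M X (j - i) else 0) + (if j < i then phi_mix M X (i - j) else 0)))"
    using I by (intro sum_mono expectation_Z_mult_le) auto
  also have "\<dots> = \<nu> * (1 + (\<Sum>j\<in>{j\<in>I. i < j}. phi_mix M X (j - i))
      + (\<Sum>j\<in>{j\<in>I. j < i}. phi_mix M X (i - j)))"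
    using I by (simp add: sum.distrib sum_distrib_left[symmetric] sum.inter_filter)
  also have "\<dots> \<le> \<nu> * (1 + 2 * phi_series)"
    using sum_gaps_above_le_suminf[OF sm phi_mix_nonneg I(1), of i]
      sum_gaps_below_le_suminf[OF sm phi_mix_nonneg I(1), of i] nu_nonneg
    by (intro mult_left_mono) auto
  finally show ?thesis .
qed

lemma expectation_sum_Z_square_le:
  assumes sm: "summable (\<lambda>k. phi_mix M X (Suc k))" and I: "finite I" "I \<subseteq> {1..}"
  shows "expectation (\<lambda>\<omega>. (\<Sum>i\<in>I. Z i \<omega>)\<^sup>2) \<le> real (card I) * \<nu> * (1 + 2 * phi_series)"
proof -
  have "expectation (\<lambda>\<omega>. (\<Sum>i\<in>I. Z i \<omega>)\<^sup>2) = expectation (\<lambda>\<omega>. \<Sum>i\<in>I. \<Sum>j\<in>I. Z i \<omega> * Z j \<omega>)"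
    by (simp add: power2_eq_square sum_product)
  also have "\<dots> = (\<Sum>i\<in>I. \<Sum>j\<in>I. expectation (\<lambda>\<omega>. Z i \<omega> * Z j \<omega>))"
    using I by (simp add: subset_eq integrable_Z_mult)
  also have "\<dots> \<le> (\<Sum>i\<in>I. \<nu> * (1 + 2 * phi_series))"
    using I by (intro sum_mono sum_expectation_Z_mult_le[OF sm]) auto
  finally show ?thesis by simp
qed

lemma expectation_exp_sum_Z_le:
  assumes sm: "summable (\<lambda>k. phi_mix M X (Suc k))" and I: "finite I" "I \<subseteq> {1..}"
    and t: "\<bar>t\<bar> * real (card I) \<le> 1"
  shows "expectation (\<lambda>\<omega>. exp (t * (\<Sum>i\<in>I. Z i \<omega>)))
    \<le> 1 + t\<^sup>2 * (real (card I) * \<nu> * (1 + 2 * phi_series))"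
proof -
  let ?S = "\<lambda>\<omega>. \<Sum>i\<in>I. Z i \<omega>"
  have [measurable]: "\<And>i. i \<in> I \<Longrightarrow> Z i \<in> borel_measurable M" using I by auto
  have bound: "\<bar>?S \<omega>\<bar> \<le> real (card I)" for \<omega>
  proof -
    have "\<bar>?S \<omega>\<bar> \<le> (\<Sum>i\<in>I. \<bar>Z i \<omega>\<bar>)" by (rule sum_abs)
    also have "\<dots> \<le> (\<Sum>i\<in>I. 1)" by (intro sum_mono abs_Z_le_1)
    finally show ?thesis by simp
  qed
  then have small: "\<bar>t * ?S \<omega>\<bar> \<le> 1" for \<omega>
    using t by (simp add: abs_mult) (meson abs_ge_zero mult_left_mono order_trans)
  have int_S: "integrable M ?S" using I by (simp add: subset_eq integrable_Z)
  have int_S2: "integrable M (\<lambda>\<omega>. (?S \<omega>)\<^sup>2)"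
    using bound by (intro integrable_const_bound[where B="real (card I) ^ 2"] AE_I2)
      (auto simp: abs_le_square_iff[symmetric])
  have int_exp: "integrable M (\<lambda>\<omega>. exp (t * ?S \<omega>))"
    using small by (intro integrable_const_bound[where B="exp 1"] AE_I2) (auto simp: abs_le_iff)
  have "expectation ?S = 0"
    using I by (simp add: subset_eq integrable_Z expectation_Z)
  then have "expectation (\<lambda>\<omega>. 1 + t * ?S \<omega> + t\<^sup>2 * (?S \<omega>)\<^sup>2) = 1 + t\<^sup>2 * expectation (\<lambda>\<omega>. (?S \<omega>)\<^sup>2)"
    using int_S int_S2 by (simp add: prob_space)
  moreover have "expectation (\<lambda>\<omega>. exp (t * ?S \<omega>)) \<le> expectation (\<lambda>\<omega>. 1 + t * ?S \<omega> + t\<^sup>2 * (?S \<omega>)\<^sup>2)"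
    using int_exp int_S int_S2 exp_le_1_add_square[OF small]
    by (intro integral_mono) (auto simp: power_mult_distrib)
  moreover have "t\<^sup>2 * expectation (\<lambda>\<omega>. (?S \<omega>)\<^sup>2) \<le> t\<^sup>2 * (real (card I) * \<nu> * (1 + 2 * phi_series))"
    using expectation_sum_Z_square_le[OF sm I] by (simp add: mult_left_mono)
  ultimately show ?thesis by linarith
qed

definition block_sum :: "nat \<Rightarrow> nat \<Rightarrow> nat \<Rightarrow> 'a \<Rightarrow> real" where
  "block_sum n m b \<omega> = (\<Sum>i\<in>block n m b. Z i \<omega>)"

lemma measurable_block_sum_gen_measure:
  "block n m b \<subseteq> I \<Longrightarrow> block_sum n m b \<in> borel_measurable (gen_measure M X I)"
  unfolding block_sum_def by (intro borel_measurable_sum measurable_Z_gen_measure) auto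

lemma measurable_block_sum_past:
  assumes "1 \<le> m" "Suc b * m \<le> k"
  shows "block_sum n m b \<in> borel_measurable (gen_measure M X {1..k})"
  using block_subset_atLeastAtMost[OF assms(1), of n b] assms(2)
  by (intro measurable_block_sum_gen_measure) auto

lemma measurable_block_sum_future:
  assumes "1 \<le> m" "j \<le> b * m + 1"
  shows "block_sum n m b \<in> borel_measurable (gen_measure M X {j..})"
  using block_subset_atLeastAtMost[OF assms(1), of n b] assms(2)
  by (intro measurable_block_sum_gen_measure) auto

lemma borel_measurable_block_sum [measurable]: "block_sum n m b \<in> borel_measurable M"
  by (rule borel_measurable_gen_measureD[OF block_subset_atLeast_1 measurable_block_sum_gen_measure])
    (rule order_refl)

lemma abs_sum_block_sum_le:
  assumes "1 \<le> m"
  shows "\<bar>\<Sum>b\<in>B. block_sum n m b \<omega>\<bar> \<le> real m * card B"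
proof -
  have "\<bar>block_sum n m b \<omega>\<bar> \<le> m" for b
  proof -
    have "\<bar>block_sum n m b \<omega>\<bar> \<le> (\<Sum>i\<in>block n m b. \<bar>Z i \<omega>\<bar>)" unfolding block_sum_def by (rule sum_abs)
    also have "\<dots> \<le> (\<Sum>i\<in>block n m b. 1)" by (intro sum_mono abs_Z_le_1)
    also have "\<dots> \<le> m" using card_block_le[OF assms] by simp
    finally show ?thesis .
  qed
  then have "\<bar>\<Sum>b\<in>B. block_sum n m b \<omega>\<bar> \<le> (\<Sum>b\<in>B. real m)"
    by (intro order_trans[OF sum_abs] sum_mono)
  then show ?thesis by (simp add: mult.commute)
qed

lemma exp_block_sums_le:
  assumes "1 \<le> m" "\<bar>t\<bar> * real m * card B \<le> r"
  shows "exp (t * (\<Sum>b\<in>B. block_sum n m b \<omega>)) \<le> exp r"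
proof -
  have "t * (\<Sum>b\<in>B. block_sum n m b \<omega>) \<le> \<bar>t\<bar> * \<bar>\<Sum>b\<in>B. block_sum n m b \<omega>\<bar>"
    by (simp add: abs_mult[symmetric])
  also have "\<dots> \<le> \<bar>t\<bar> * (real m * card B)"
    using abs_sum_block_sum_le[OF assms(1)] by (intro mult_left_mono) auto
  finally show ?thesis using assms(2) by (simp add: mult.assoc)
qed

text \<open>The blocks in \<open>T\<close> end at index \<open>(N - 1) m\<close> and block \<open>N\<close> starts at \<open>N m + 1\<close>;
  this gap of \<open>m + 1\<close> is where the mixing coefficient is evaluated.\<close>
lemma expectation_exp_insert_block_le:
  assumes m: "1 \<le> m" and t: "\<bar>t\<bar> * real m \<le> 1"
    and T: "finite T" "\<And>b. b \<in> T \<Longrightarrow> Suc b < N"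
  shows "expectation (\<lambda>\<omega>. exp (t * (\<Sum>b\<in>insert N T. block_sum n m b \<omega>)))
    \<le> expectation (\<lambda>\<omega>. exp (t * (\<Sum>b\<in>T. block_sum n m b \<omega>)))
      * (expectation (\<lambda>\<omega>. exp (t * block_sum n m N \<omega>)) + phi_mix M X (m + 1) * exp 1)"
proof -
  let ?f = "\<lambda>\<omega>. exp (t * (\<Sum>b\<in>T. block_sum n m b \<omega>))"
  let ?g = "\<lambda>\<omega>. exp (t * block_sum n m N \<omega>)"
  have "N \<notin> T" using T(2)[of N] by auto
  then have split: "(\<lambda>\<omega>. exp (t * (\<Sum>b\<in>insert N T. block_sum n m b \<omega>))) = (\<lambda>\<omega>. ?f \<omega> * ?g \<omega>)"
    using T(1) by (simp add: distrib_left exp_add mult.commute)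
  have g_le: "?g \<omega> \<le> exp 1" for \<omega>
    using exp_block_sums_le[OF m, of t "{N}" 1] t by simp
  show ?thesis
  proof (cases "T = {}")
    case True
    then show ?thesis using phi_mix_nonneg[of "m + 1"] by (simp add: prob_space)
  next
    case False
    define k where "k = (N - 1) * m"
    have N: "2 \<le> N" using False T(2) by fastforce
    then have k: "1 \<le> k" using m unfolding k_def by simp
    have "block_sum n m b \<in> borel_measurable (gen_measure M X {1..k})" if "b \<in> T" for b
      using T(2)[OF that] unfolding k_def by (intro measurable_block_sum_past m mult_le_mono1) linarith
    then have "?f \<in> borel_measurable (gen_measure M X {1..k})" by measurable
    moreover have "k + (m + 1) = N * m + 1" unfolding k_def using N by (simp add: algebra_simps mult_eq_if)
    then have "block_sum n m N \<in> borel_measurable (gen_measure M X {k + (m + 1)..})"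
      by (intro measurable_block_sum_future m) simp
    then have "?g \<in> borel_measurable (gen_measure M X {k + (m + 1)..})" by measurable
    ultimately show ?thesis unfolding split
      using exp_block_sums_le[OF m order_refl, where t=t and B=T] g_le
      by (intro mixing_expectation_mult[OF k]) auto
  qed
qed

lemma expectation_exp_separated_blocks_le:
  assumes m: "1 \<le> m" and t: "\<bar>t\<bar> * real m \<le> 1"
  shows "finite S \<Longrightarrow> S \<subseteq> {..<N} \<Longrightarrow> (\<forall>b\<in>S. Suc b \<notin> S) \<Longrightarrow>
    expectation (\<lambda>\<omega>. exp (t * (\<Sum>b\<in>S. block_sum n m b \<omega>)))
      \<le> (\<Prod>b\<in>S. expectation (\<lambda>\<omega>. exp (t * block_sum n m b \<omega>)) + exp 1 * phi_mix M X (m + 1))"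
proof (induction N arbitrary: S)
  case 0
  then show ?case by (simp add: prob_space)
next
  case (Suc N)
  show ?case
  proof (cases "N \<in> S")
    case False
    then have "S \<subseteq> {..<N}" using Suc.prems(2) by (auto simp: less_Suc_eq)
    then show ?thesis using Suc.IH Suc.prems(1,3) by blast
  next
    case True
    define T where "T = S - {N}"
    have S: "S = insert N T" "N \<notin> T" using True T_def by auto
    have T: "finite T" "T \<subseteq> {..<N}" "\<forall>b\<in>T. Suc b \<notin> T"
      using Suc.prems(1,3) Suc.prems(2)[THEN subsetD] unfolding T_def by (auto simp: less_Suc_eq)
    have gap: "Suc b < N" if "b \<in> T" for b
    proof -
      have "b < N" using that T(2) by auto
      moreover have "Suc b \<noteq> N" using that True Suc.prems(3) unfolding T_def by auto
      ultimately show ?thesis by simp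
    qed
    have "expectation (\<lambda>\<omega>. exp (t * (\<Sum>b\<in>S. block_sum n m b \<omega>)))
        \<le> expectation (\<lambda>\<omega>. exp (t * (\<Sum>b\<in>T. block_sum n m b \<omega>)))
          * (expectation (\<lambda>\<omega>. exp (t * block_sum n m N \<omega>)) + exp 1 * phi_mix M X (m + 1))"
      unfolding S(1) using expectation_exp_insert_block_le[OF m t T(1) gap] by (simp add: mult.commute)
    also have "\<dots> \<le> (\<Prod>b\<in>T. expectation (\<lambda>\<omega>. exp (t * block_sum n m b \<omega>)) + exp 1 * phi_mix M X (m + 1))
          * (expectation (\<lambda>\<omega>. exp (t * block_sum n m N \<omega>)) + exp 1 * phi_mix M X (m + 1))"
      using Suc.IH[OF T] phi_mix_nonneg[of "m + 1"] by (intro mult_right_mono add_nonneg_nonneg) auto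
    finally show ?thesis unfolding S(1) using S(2) T(1) by (simp add: mult.commute)
  qed
qed

lemma expectation_exp_block_sum_le:
  assumes sm: "summable (\<lambda>k. phi_mix M X (Suc k))" and m: "1 \<le> m" and t: "\<bar>t\<bar> * real m \<le> 1"
  shows "expectation (\<lambda>\<omega>. exp (t * block_sum n m b \<omega>)) \<le> 1 + t\<^sup>2 * (real m * \<nu> * (1 + 2 * phi_series))"
proof -
  have card: "real (card (block n m b)) \<le> real m" using card_block_le[OF m] by simp
  then have "\<bar>t\<bar> * real (card (block n m b)) \<le> 1" using t by (meson abs_ge_zero mult_left_mono order_trans)
  then have "expectation (\<lambda>\<omega>. exp (t * block_sum n m b \<omega>))
      \<le> 1 + t\<^sup>2 * (real (card (block n m b)) * \<nu> * (1 + 2 * phi_series))"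
    unfolding block_sum_def by (rule expectation_exp_sum_Z_le[OF sm finite_block block_subset_atLeast_1])
  also have "\<dots> \<le> 1 + t\<^sup>2 * (real m * \<nu> * (1 + 2 * phi_series))"
    using card nu_nonneg suminf_nonneg[OF sm phi_mix_nonneg]
    by (intro add_left_mono mult_left_mono mult_right_mono) auto
  finally show ?thesis .
qed

lemma prob_sum_separated_blocks_ge_le:
  assumes sm: "summable (\<lambda>k. phi_mix M X (Suc k))" and m: "1 \<le> m" and s: "\<bar>s\<bar> = 1"
    and B: "finite B" "\<forall>b\<in>B. Suc b \<notin> B"
  shows "prob {\<omega>\<in>space M. u \<le> s * (\<Sum>b\<in>B. block_sum n m b \<omega>)}
    \<le> exp (- u / m + card B * (\<nu> * (1 + 2 * phi_series) / m + exp 1 * phi_mix M X (m + 1)))"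
proof -
  define t where "t = s / m"
  define c where "c = \<nu> * (1 + 2 * phi_series) / m + exp 1 * phi_mix M X (m + 1)"
  let ?S = "\<lambda>\<omega>. \<Sum>b\<in>B. block_sum n m b \<omega>"
  have "s\<^sup>2 = 1" by (metis power2_abs power_one s)
  then have tm: "\<bar>t\<bar> * real m = 1" "t\<^sup>2 = 1 / (real m)\<^sup>2"
    using m s unfolding t_def by (simp_all add: abs_div power_divide)
  have "{\<omega>\<in>space M. u \<le> s * ?S \<omega>} = {\<omega>\<in>space M. exp (u / m) \<le> exp (t * ?S \<omega>)}"
    using m unfolding t_def by (auto simp: field_simps)
  then have "prob {\<omega>\<in>space M. u \<le> s * ?S \<omega>} \<le> expectation (\<lambda>\<omega>. exp (t * ?S \<omega>)) / exp (u / m)"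
    using exp_block_sums_le[OF m order_refl, where t=t and B=B]
    by (simp only:) (intro integral_Markov_inequality_measure[where A="space M"]
        integrable_const_bound[where B="exp (\<bar>t\<bar> * real m * card B)"] AE_I2; simp)
  also have "expectation (\<lambda>\<omega>. exp (t * ?S \<omega>))
      \<le> (\<Prod>b\<in>B. expectation (\<lambda>\<omega>. exp (t * block_sum n m b \<omega>)) + exp 1 * phi_mix M X (m + 1))"
    using B by (intro expectation_exp_separated_blocks_le[OF m _ _ _ B(2), of _ "Suc (Max B)"])
      (auto simp: tm le_imp_less_Suc)
  also have "\<dots> \<le> (\<Prod>b\<in>B. exp c)"
  proof (intro prod_mono conjI)
    fix b
    have "t\<^sup>2 * (real m * \<nu> * (1 + 2 * phi_series)) = \<nu> * (1 + 2 * phi_series) / m"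
      unfolding tm(2) using m by (simp add: power2_eq_square field_simps)
    then have "expectation (\<lambda>\<omega>. exp (t * block_sum n m b \<omega>)) + exp 1 * phi_mix M X (m + 1) \<le> 1 + c"
      using expectation_exp_block_sum_le[OF sm m, of t n b] tm(1) unfolding c_def by simp
    then show "expectation (\<lambda>\<omega>. exp (t * block_sum n m b \<omega>)) + exp 1 * phi_mix M X (m + 1) \<le> exp c"
      using exp_ge_add_one_self[of c] by linarith
    show "0 \<le> expectation (\<lambda>\<omega>. exp (t * block_sum n m b \<omega>)) + exp 1 * phi_mix M X (m + 1)"
      using phi_mix_nonneg by (simp add: integral_nonneg)
  qed
  also have "\<dots> = exp (card B * c)" by (simp add: exp_of_nat_mult[symmetric])
  finally show ?thesis unfolding c_def by (simp add: exp_diff[symmetric] divide_right_mono)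
qed

lemma prob_abs_sum_Z_ge_le:
  assumes sm: "summable (\<lambda>k. phi_mix M X (Suc k))" and m: "1 \<le> m"
  shows "prob {\<omega>\<in>space M. 2 * u \<le> \<bar>\<Sum>i=1..n. Z i \<omega>\<bar>}
    \<le> 4 * exp (- u / m
      + (real n / real m + 1) * (\<nu> * (1 + 2 * phi_series) / m + exp 1 * phi_mix M X (m + 1)))"
proof -
  define B where "B r = {b\<in>{..n div m}. b mod 2 = r}" for r :: nat
  define S where "S r \<omega> = (\<Sum>b\<in>B r. block_sum n m b \<omega>)" for r \<omega>
  define c where "c = \<nu> * (1 + 2 * phi_series) / m + exp 1 * phi_mix M X (m + 1)"
  define E where "E = exp (- u / m + (real n / real m + 1) * c)"
  let ?A = "\<lambda>s r. {\<omega>\<in>space M. u \<le> s * S r \<omega>}"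
  have [measurable]: "S r \<in> borel_measurable M" for r unfolding S_def by measurable
  have sets: "?A s r \<in> sets M" for s r by measurable
  have one_sided: "prob (?A s r) \<le> E" if "\<bar>s\<bar> = 1" for s r
  proof -
    have "Suc b mod 2 \<noteq> b mod 2" for b :: nat by presburger
    then have "\<forall>b\<in>B r. Suc b \<notin> B r" unfolding B_def by auto
    then have "prob (?A s r) \<le> exp (- u / m + card (B r) * c)"
      using prob_sum_separated_blocks_ge_le[OF sm m that] unfolding S_def c_def B_def by simp
    also have "\<dots> \<le> E"
      unfolding E_def c_def B_def
      using card_parity_blocks_le[OF m] nu_nonneg suminf_nonneg[OF sm phi_mix_nonneg] phi_mix_nonneg[of "m + 1"]
      by (intro exp_mono add_left_mono mult_right_mono) auto
    finally show ?thesis .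
  qed
  have "(\<Sum>i=1..n. Z i \<omega>) = S 0 \<omega> + S 1 \<omega>" for \<omega>
    unfolding sum_eq_sum_parity_blocks[of _ n m] S_def B_def block_sum_def by (simp add: eval_nat_numeral)
  then have "{\<omega>\<in>space M. 2 * u \<le> \<bar>\<Sum>i=1..n. Z i \<omega>\<bar>} \<subseteq> (?A 1 0 \<union> ?A (-1) 0) \<union> (?A 1 1 \<union> ?A (-1) 1)"
    by (auto simp: abs_if split: if_splits)
  then have "prob {\<omega>\<in>space M. 2 * u \<le> \<bar>\<Sum>i=1..n. Z i \<omega>\<bar>} \<le> prob ((?A 1 0 \<union> ?A (-1) 0) \<union> (?A 1 1 \<union> ?A (-1) 1))"
    using sets by (intro finite_measure_mono sets.Un)
  also have "\<dots> \<le> (prob (?A 1 0) + prob (?A (-1) 0)) + (prob (?A 1 1) + prob (?A (-1) 1))"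
    using sets by (intro order_trans[OF measure_Un_le] add_mono measure_Un_le sets.Un)
  also have "\<dots> \<le> 4 * E"
    using one_sided[of 1 0] one_sided[of 1 1] one_sided[of "-1" 0] one_sided[of "-1" 1] by simp
  finally show ?thesis unfolding E_def c_def .
qed

end

lemma (in real_rv_seq) prob_abs_count_dev_ge_le:
  assumes "\<And>i. 1 \<le> i \<Longrightarrow> prob (X i -` {lo<..hi} \<inter> space M) = \<nu>"
    and "summable (\<lambda>k. phi_mix M X (Suc k))" and "1 \<le> m"
  shows "prob {\<omega>\<in>space M. 2 * u \<le> \<bar>count_dev X lo hi \<nu> n \<omega>\<bar>}
    \<le> 4 * exp (- u / m + (real n / real m + 1)
      * (\<nu> * (1 + 2 * (\<Sum>k. phi_mix M X (Suc k))) / m + exp 1 * phi_mix M X (m + 1)))"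
proof -
  interpret interval_hits M X lo hi \<nu> by unfold_locales (rule assms(1))
  show ?thesis
    using prob_abs_sum_Z_ge_le[OF assms(2,3)] unfolding count_dev_def Z_def .
qed

lemma eventually_le_of_bigo_powr_neg3:
  fixes \<phi> :: "nat \<Rightarrow> real"
  assumes "\<phi> \<in> O(\<lambda>n. real n powr (-3))" and nonneg: "\<And>n. 0 \<le> \<phi> n"
  shows "\<exists>c>0. eventually (\<lambda>n. \<phi> n \<le> c * real n powr (-3)) sequentially"
proof -
  obtain c where c: "c > 0" "eventually (\<lambda>n. norm (\<phi> n) \<le> c * norm (real n powr (-3))) sequentially"
    using landau_o.bigE[OF assms(1)] by blast
  from c(2) have "eventually (\<lambda>n. \<phi> n \<le> c * real n powr (-3)) sequentially"
    by eventually_elim (simp add: nonneg)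
  with c(1) show ?thesis by blast
qed

lemma summable_of_bigo_powr_neg3:
  fixes \<phi> :: "nat \<Rightarrow> real"
  assumes "\<phi> \<in> O(\<lambda>n. real n powr (-3))" and nonneg: "\<And>n. 0 \<le> \<phi> n"
  shows "summable (\<lambda>k. \<phi> (Suc k))" "summable (\<lambda>k. sqrt (\<phi> (Suc k)))"
proof -
  obtain c where le: "eventually (\<lambda>n. \<phi> n \<le> c * real n powr (-3)) sequentially"
    using eventually_le_of_bigo_powr_neg3[OF assms] by blast
  have "eventually (\<lambda>n. norm (\<phi> n) \<le> c * real n powr (-3)) sequentially"
    using le by eventually_elim (simp add: nonneg)
  moreover have "summable (\<lambda>n. c * real n powr (-3))"
    by (intro summable_mult) (simp add: summable_real_powr_iff)
  ultimately have "summable \<phi>" by (rule summable_comparison_test_ev)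
  then show "summable (\<lambda>k. \<phi> (Suc k))" by (simp add: summable_Suc_iff)
  have "eventually (\<lambda>n. norm (sqrt (\<phi> n)) \<le> sqrt c * real n powr (-3/2)) sequentially"
    using le
  proof eventually_elim
    case (elim n)
    have "sqrt (\<phi> n) \<le> sqrt (c * real n powr (-3))" using elim by simp
    also have "\<dots> = sqrt c * sqrt (real n powr (-3))" by (simp add: real_sqrt_mult)
    also have "sqrt (real n powr (-3)) = real n powr (-3/2)"
      by (subst powr_half_sqrt[symmetric]) (auto simp: powr_powr)
    finally show ?case using nonneg[of n] by simp
  qed
  moreover have "summable (\<lambda>n. sqrt c * real n powr (-3/2))"
    by (intro summable_mult) (simp add: summable_real_powr_iff)
  ultimately have "summable (\<lambda>n. sqrt (\<phi> n))" by (rule summable_comparison_test_ev)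
  then show "summable (\<lambda>k. sqrt (\<phi> (Suc k)))" using summable_Suc_iff[of "\<lambda>n. sqrt (\<phi> n)"] by simp
qed

lemma eventually_le_at_ceiling_fourth_root:
  fixes \<phi> :: "nat \<Rightarrow> real"
  assumes c: "0 \<le> c" and le: "eventually (\<lambda>n. \<phi> n \<le> c * real n powr (-3)) sequentially"
  shows "eventually (\<lambda>n. \<phi> (nat \<lceil>real n powr (1/4)\<rceil> + 1) \<le> c / (real n powr (1/4)) ^ 3) sequentially"
proof -
  let ?q = "\<lambda>n::nat. real n powr (1/4)"
  have q_le: "?q n \<le> real (nat \<lceil>?q n\<rceil> + 1)" for n by linarith
  have "filterlim ?q at_top sequentially" by real_asymp
  then have "filterlim (\<lambda>n. nat \<lceil>?q n\<rceil> + 1) sequentially sequentially"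
    unfolding filterlim_sequentially_iff_filterlim_real
    by (rule filterlim_at_top_mono) (use q_le in auto)
  from eventually_conj[OF eventually_compose_filterlim[OF le this] eventually_gt_at_top[of 0]]
  show ?thesis
  proof (rule eventually_mono)
    fix n :: nat
    define k where "k = nat \<lceil>?q n\<rceil> + 1"
    assume "\<phi> (nat \<lceil>?q n\<rceil> + 1) \<le> c * real (nat \<lceil>?q n\<rceil> + 1) powr (-3) \<and> 0 < n"
    then have le_k: "\<phi> k \<le> c * real k powr (-3)" and n: "0 < n" unfolding k_def by auto
    have "0 < k" unfolding k_def by simp
    then have "real k powr (-3) = 1 / real k ^ 3" by (simp add: powr_minus_divide powr_realpow)
    moreover have "c / real k ^ 3 \<le> c / ?q n ^ 3"
      using c n q_le[of n] \<open>0 < k\<close> unfolding k_def[symmetric]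
      by (intro divide_left_mono power_mono mult_pos_pos) auto
    ultimately show "\<phi> (nat \<lceil>?q n\<rceil> + 1) \<le> c / ?q n ^ 3" using le_k unfolding k_def by simp
  qed
qed

text \<open>The exponent of \<open>prob_abs_count_dev_ge_le\<close> for block length \<open>m = \<lceil>q\<rceil>\<close>, \<open>q = n powr (1/4)\<close>,
  threshold \<open>u = 8 q ln n\<close> and interval probability \<open>\<nu> = O(n powr (-1/2) ln n powr (3/4))\<close>.\<close>
lemma tail_exponent_le:
  fixes q m n \<nu> \<phi> :: real
  assumes q: "1 \<le> q" "q \<le> m" "m \<le> q + 1" "n = q ^ 4"
    and \<nu>: "0 \<le> \<nu>" "\<nu> \<le> D * L / q\<^sup>2" and \<phi>: "0 \<le> \<phi>" "\<phi> \<le> c / q ^ 3"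
    and pos: "0 \<le> C" "0 \<le> D" "0 \<le> L" and small: "2 * D * C * L \<le> ln n"
  shows "- (8 * q * ln n) / m + (n / m + 1) * (\<nu> * C / m + exp 1 * \<phi>) \<le> 2 * exp 1 * c - 3 * ln n"
proof -
  have m: "0 < m" "m \<le> 2 * q" using q by linarith+
  have ln: "0 \<le> ln n" using q by simp
  have "4 * ln n * m \<le> 4 * ln n * (2 * q)" using m ln by (intro mult_left_mono) auto
  then have first: "4 * ln n \<le> (8 * q * ln n) / m" using m by (simp add: le_divide_eq algebra_simps)
  have "n / m \<le> n / q" using q by (intro divide_left_mono) auto
  also have "\<dots> = q ^ 3" using q by (simp add: power_def)
  moreover have "1 \<le> q ^ 3" using q(1) by (simp add: one_le_power)
  ultimately have count: "n / m + 1 \<le> 2 * q ^ 3" by linarith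
  have "\<nu> * C / m \<le> (D * L / q\<^sup>2) * C / q"
    using \<nu> pos q m by (intro frac_le mult_right_mono) auto
  also have "\<dots> = D * C * L / q ^ 3" by (simp add: power_def field_simps)
  moreover have "exp 1 * \<phi> \<le> exp 1 * (c / q ^ 3)" using \<phi>(2) by (intro mult_left_mono) auto
  ultimately have "\<nu> * C / m + exp 1 * \<phi> \<le> (D * C * L + exp 1 * c) / q ^ 3"
    by (simp add: add_divide_distrib)
  then have "(n / m + 1) * (\<nu> * C / m + exp 1 * \<phi>) \<le> 2 * q ^ 3 * ((D * C * L + exp 1 * c) / q ^ 3)"
    using count \<nu> \<phi> pos m by (intro mult_mono) auto
  also have "\<dots> = 2 * D * C * L + 2 * exp 1 * c" using q by (simp add: field_simps)
  finally show ?thesis using first small by linarith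
qed

lemma (in real_rv_seq) eventually_prob_count_dev_ge_le:
  assumes rate: "eventually (\<lambda>n. phi_mix M X n \<le> c * real n powr (-3)) sequentially" and c: "0 \<le> c"
    and sm: "summable (\<lambda>k. phi_mix M X (Suc k))" and D: "0 \<le> D"
  shows "eventually (\<lambda>n. \<forall>lo hi \<nu>. (\<forall>i\<ge>1. prob (X i -` {lo<..hi} \<inter> space M) = \<nu>) \<longrightarrow>
      \<nu> \<le> D * real n powr (-1/2) * ln (real n) powr (3/4) \<longrightarrow>
      prob {\<omega>\<in>space M. 16 * real n powr (1/4) * ln (real n) \<le> \<bar>count_dev X lo hi \<nu> n \<omega>\<bar>}
        \<le> 4 * exp (2 * exp 1 * c) / real n ^ 3) sequentially"
proof -
  define C where "C = 1 + 2 * (\<Sum>k. phi_mix M X (Suc k))"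
  have C: "0 \<le> C" unfolding C_def using suminf_nonneg[OF sm phi_mix_nonneg] by simp
  have "eventually (\<lambda>n. 1 \<le> n \<and> 2 * D * C * ln (real n) powr (3/4) \<le> ln (real n)
      \<and> phi_mix M X (nat \<lceil>real n powr (1/4)\<rceil> + 1) \<le> c / (real n powr (1/4)) ^ 3) sequentially"
    by (intro eventually_conj eventually_ge_at_top eventually_le_at_ceiling_fourth_root[OF c rate])
      real_asymp
  then show ?thesis
  proof (rule eventually_mono, intro allI impI)
    fix n lo hi \<nu>
    assume ev: "1 \<le> n \<and> 2 * D * C * ln (real n) powr (3/4) \<le> ln (real n)
      \<and> phi_mix M X (nat \<lceil>real n powr (1/4)\<rceil> + 1) \<le> c / (real n powr (1/4)) ^ 3"
      and hit: "\<forall>i\<ge>1. prob (X i -` {lo<..hi} \<inter> space M) = \<nu>"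
      and \<nu>_le: "\<nu> \<le> D * real n powr (-1/2) * ln (real n) powr (3/4)"
    define q where "q = real n powr (1/4)"
    define m where "m = nat \<lceil>q\<rceil>"
    have n: "0 < real n" using ev by simp
    have q: "1 \<le> q" "q \<le> real m" "real m \<le> q + 1" "real n = q ^ 4"
      using ev n unfolding q_def m_def by (auto simp: ge_one_powr_ge_zero powr_power)
    have m: "1 \<le> m" using q by linarith
    have "real n powr (-1/2) = 1 / q\<^sup>2" unfolding q_def using n by (simp add: powr_power powr_minus_divide)
    then have \<nu>: "0 \<le> \<nu>" "\<nu> \<le> D * ln (real n) powr (3/4) / q\<^sup>2"
      using \<nu>_le hit measure_nonneg[of M "X 1 -` {lo<..hi} \<inter> space M"] by auto
    have "prob {\<omega>\<in>space M. 2 * (8 * q * ln (real n)) \<le> \<bar>count_dev X lo hi \<nu> n \<omega>\<bar>}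
      \<le> 4 * exp (- (8 * q * ln (real n)) / m
          + (real n / real m + 1) * (\<nu> * C / m + exp 1 * phi_mix M X (m + 1)))"
      unfolding C_def by (rule prob_abs_count_dev_ge_le[OF _ sm m]) (use hit in auto)
    also have "\<dots> \<le> 4 * exp (2 * exp 1 * c - 3 * ln (real n))"
      using tail_exponent_le[OF q \<nu> phi_mix_nonneg _ C D _ ] ev phi_mix_nonneg
      unfolding q_def m_def by simp
    also have "\<dots> = 4 * exp (2 * exp 1 * c) / real n ^ 3"
      using exp_of_nat_mult[of 3 "ln (real n)"] n by (simp add: exp_diff)
    finally show "prob {\<omega>\<in>space M. 16 * real n powr (1/4) * ln (real n) \<le> \<bar>count_dev X lo hi \<nu> n \<omega>\<bar>}
        \<le> 4 * exp (2 * exp 1 * c) / real n ^ 3"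
      unfolding q_def by (simp add: mult.assoc)
  qed
qed

lemma (in prob_space) cdf_distr_eq:
  assumes "X \<in> borel_measurable M" "\<And>x. measure M {\<omega>\<in>space M. X \<omega> \<le> x} = F x"
  shows "F = cdf (distr M borel X)"
proof
  fix x
  have "X -` {..x} \<inter> space M = {\<omega>\<in>space M. X \<omega> \<le> x}" by auto
  then show "F x = cdf (distr M borel X) x"
    using assms by (simp add: cdf_def measure_distr)
qed

lemma (in prob_space) measure_vimage_Ioc_eq_cdf_diff:
  assumes "X \<in> borel_measurable M" "lo \<le> hi"
  shows "measure M (X -` {lo<..hi} \<inter> space M) = cdf (distr M borel X) hi - cdf (distr M borel X) lo"
proof (cases "lo = hi")
  case False
  have "finite_borel_measure (distr M borel X)"
    using assms(1) by (simp add: real_distribution.finite_borel_measure_M)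
  then show ?thesis using assms False by (simp add: finite_borel_measure.cdf_diff_eq measure_distr)
qed simp

lemma (in real_distribution) quantile_set_nonempty_bdd_below:
  assumes "0 < p" "p < 1"
  shows "{x. cdf M x \<ge> p} \<noteq> {}" "bdd_below {x. cdf M x \<ge> p}"
proof -
  have "eventually (\<lambda>x. p < cdf M x) at_top" using cdf_lim_at_top_prob assms(2) by (rule order_tendstoD)
  then obtain y where "p < cdf M y" unfolding eventually_at_top_linorder by blast
  then show "{x. cdf M x \<ge> p} \<noteq> {}" using less_imp_le by blast
  have "eventually (\<lambda>x. cdf M x < p) at_bot" using cdf_lim_at_bot assms(1) by (rule order_tendstoD)
  then obtain x0 where x0: "\<And>x. x \<le> x0 \<Longrightarrow> cdf M x < p" unfolding eventually_at_bot_linorder by blast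
  have "x0 \<le> y" if "cdf M y \<ge> p" for y using that x0[of y] by fastforce
  then show "bdd_below {x. cdf M x \<ge> p}" by (intro bdd_belowI) blast
qed

lemma (in real_distribution) cdf_at_quantile:
  assumes "0 < p" "p < 1" and cont: "isCont (cdf M) (Inf {x. cdf M x \<ge> p})"
  shows "cdf M (Inf {x. cdf M x \<ge> p}) = p"
proof -
  define S where "S = {x. cdf M x \<ge> p}"
  define \<xi> where "\<xi> = Inf S"
  note ne = quantile_set_nonempty_bdd_below(1)[OF assms(1,2), folded S_def]
  note bdd = quantile_set_nonempty_bdd_below(2)[OF assms(1,2), folded S_def]
  have "cdf M \<xi> \<le> p"
  proof (rule LIMSEQ_le_const2)
    show "(\<lambda>k. cdf M (\<xi> + - inverse (real (Suc k)))) \<longlonglongrightarrow> cdf M \<xi>"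
      using cont unfolding \<xi>_def S_def
      by (rule isCont_tendsto_compose) (rule LIMSEQ_inverse_real_of_nat_add_minus)
    have "cdf M (\<xi> + - inverse (real (Suc k))) < p" for k
    proof (rule ccontr)
      assume "\<not> cdf M (\<xi> + - inverse (real (Suc k))) < p"
      then have "\<xi> + - inverse (real (Suc k)) \<in> S" unfolding S_def by simp
      then have "\<xi> \<le> \<xi> + - inverse (real (Suc k))" unfolding \<xi>_def using bdd by (rule cInf_lower)
      then show False by simp
    qed
    then show "\<exists>N. \<forall>k\<ge>N. cdf M (\<xi> + - inverse (real (Suc k))) \<le> p" using less_imp_le by blast
  qed
  moreover have "p \<le> cdf M \<xi>"
  proof (rule LIMSEQ_le_const)
    show "(\<lambda>k. cdf M (\<xi> + inverse (real (Suc k)))) \<longlonglongrightarrow> cdf M \<xi>"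
      using cont unfolding \<xi>_def S_def
      by (rule isCont_tendsto_compose) (rule LIMSEQ_inverse_real_of_nat_add)
    have "p \<le> cdf M (\<xi> + inverse (real (Suc k)))" for k
    proof -
      have "\<xi> < \<xi> + inverse (real (Suc k))" by simp
      then obtain z where "z \<in> S" "z < \<xi> + inverse (real (Suc k))"
        using cInf_lessD[OF ne] unfolding \<xi>_def by blast
      then show ?thesis using cdf_nondecreasing[of z "\<xi> + inverse (real (Suc k))"] unfolding S_def by simp
    qed
    then show "\<exists>N. \<forall>k\<ge>N. p \<le> cdf M (\<xi> + inverse (real (Suc k)))" by blast
  qed
  ultimately show ?thesis unfolding \<xi>_def S_def by simp
qed

lemma diff_le_of_deriv_le:
  fixes F f :: "real \<Rightarrow> real"
  assumes "\<And>x. x \<in> {a..b} \<Longrightarrow> (F has_real_derivative f x) (at x)" "\<And>x. x \<in> {a..b} \<Longrightarrow> f x \<le> d"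
    and "a \<le> x" "x \<le> y" "y \<le> b"
  shows "F y - F x \<le> d * (y - x)"
proof (cases "x = y")
  case False
  then obtain z where z: "x < z" "z < y" "F y - F x = (y - x) * f z"
    using MVT2[of x y F f] assms by fastforce
  then have "f z \<le> d" using assms by auto
  then show ?thesis unfolding z(3) using z by (simp add: mult.commute mult_left_mono)
qed simp

lemma (in real_rv_seq) borel_measurable_emp_df [measurable]: "(\<lambda>\<omega>. emp_df X n \<omega> x) \<in> borel_measurable M"
proof -
  have [measurable]: "X i \<in> borel_measurable M" if "i \<in> {1..n}" for i
    using random_variable_X that by auto
  show ?thesis unfolding emp_df_def by measurable
qed

lemma emp_df_mono: "mono (emp_df X n \<omega>)"
  unfolding emp_df_def by (intro monoI mult_left_mono sum_mono) auto

lemma emp_df_dev_eq_count_dev: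
  assumes "1 \<le> n" "F \<xi> = p"
  shows "real n * \<bar>emp_df X n \<omega> y - F y - (emp_df X n \<omega> \<xi> - p)\<bar>
    = \<bar>count_dev X (min y \<xi>) (max y \<xi>) (F (max y \<xi>) - F (min y \<xi>)) n \<omega>\<bar>"
proof -
  let ?N = "\<lambda>t. \<Sum>i=1..n. (if X i \<omega> \<le> t then 1 else 0 :: real)"
  have count: "?N t - ?N s = (\<Sum>i=1..n. indicator {s<..t} (X i \<omega>))" if "s \<le> t" for s t
    using that by (subst sum_subtractf[symmetric], intro sum.cong) (auto simp: indicator_def)
  have "real n * (emp_df X n \<omega> y - F y - (emp_df X n \<omega> \<xi> - p)) = (?N y - ?N \<xi>) - real n * (F y - F \<xi>)"
    using assms unfolding emp_df_def by (simp add: algebra_simps)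
  then have "real n * \<bar>emp_df X n \<omega> y - F y - (emp_df X n \<omega> \<xi> - p)\<bar> = \<bar>(?N y - ?N \<xi>) - real n * (F y - F \<xi>)\<bar>"
    by (metis abs_mult abs_of_nat)
  also have "\<dots> = \<bar>(?N (max y \<xi>) - ?N (min y \<xi>)) - real n * (F (max y \<xi>) - F (min y \<xi>))\<bar>"
    by (cases "\<xi> \<le> y") (simp_all add: max_def min_def abs_minus_commute, simp add: algebra_simps)
  also have "\<dots> = \<bar>count_dev X (min y \<xi>) (max y \<xi>) (F (max y \<xi>) - F (min y \<xi>)) n \<omega>\<bar>"
    using count[of "min y \<xi>" "max y \<xi>"] unfolding count_dev_def sum_subtractf
    by (simp add: right_diff_distrib)
  finally show ?thesis .
qed

definition grid :: "real \<Rightarrow> real \<Rightarrow> real \<Rightarrow> nat \<Rightarrow> real" where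
  "grid x a \<delta> j = min (x - a + real j * \<delta>) (x + a)"

lemma grid_mem: "0 \<le> a \<Longrightarrow> 0 \<le> \<delta> \<Longrightarrow> grid x a \<delta> j \<in> {x - a..x + a}"
  unfolding grid_def by auto

lemma sup_abs_dev_le_grid:
  fixes G F :: "real \<Rightarrow> real"
  assumes mono: "mono G" "mono F" and pos: "0 < a" "0 < \<delta>" "0 \<le> d"
    and lip: "\<And>s t. x - a \<le> s \<Longrightarrow> s \<le> t \<Longrightarrow> t \<le> x + a \<Longrightarrow> F t - F s \<le> d * (t - s)"
    and on_grid: "\<And>j. j \<le> nat \<lceil>2 * a / \<delta>\<rceil> + 1 \<Longrightarrow> \<bar>G (grid x a \<delta> j) - F (grid x a \<delta> j) - c\<bar> \<le> B"
  shows "(SUP t\<in>{x - a..x + a}. \<bar>G t - F t - c\<bar>) \<le> B + d * \<delta>"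
proof (rule cSUP_least)
  show "{x - a..x + a} \<noteq> {}" using pos by simp
  fix t assume t: "t \<in> {x - a..x + a}"
  define j where "j = nat \<lfloor>(t - (x - a)) / \<delta>\<rfloor>"
  let ?y = "grid x a \<delta> j" and ?z = "grid x a \<delta> (j + 1)"
  have "0 \<le> (t - (x - a)) / \<delta>" using t pos by simp
  then have j_le: "real j \<le> (t - (x - a)) / \<delta>" and less_j: "(t - (x - a)) / \<delta> < real j + 1"
    unfolding j_def by (auto simp: of_nat_nat)
  have y_le: "?y \<le> t" using j_le pos by (simp add: grid_def min.coboundedI1 field_simps)
  have le_z: "t \<le> ?z" using less_j pos t by (simp add: grid_def field_simps)
  have "(t - (x - a)) / \<delta> \<le> 2 * a / \<delta>" using t pos by (intro divide_right_mono) auto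
  then have "real j \<le> real_of_int \<lceil>2 * a / \<delta>\<rceil>" using j_le le_of_int_ceiling[of "2 * a / \<delta>"] by linarith
  then have j: "j \<le> nat \<lceil>2 * a / \<delta>\<rceil>" by linarith
  have "F ?z - F ?y \<le> d * (?z - ?y)"
    using grid_mem[of a \<delta> x j] grid_mem[of a \<delta> x "j + 1"] y_le le_z pos by (intro lip) auto
  also have "\<dots> \<le> d * \<delta>" using pos by (intro mult_left_mono) (auto simp: grid_def min_def algebra_simps)
  finally have "F ?z - F ?y \<le> d * \<delta>" .
  moreover have "G ?y \<le> G t" "G t \<le> G ?z" "F ?y \<le> F t" "F t \<le> F ?z"
    using y_le le_z mono by (simp_all add: monoD)
  moreover have "\<bar>G ?y - F ?y - c\<bar> \<le> B" "\<bar>G ?z - F ?z - c\<bar> \<le> B" using on_grid j by auto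
  ultimately show "\<bar>G t - F t - c\<bar> \<le> B + d * \<delta>" by (simp add: abs_le_iff)
qed

lemma (in prob_space) AE_eventually_notin_of_union_bound:
  assumes sets: "\<And>n j. E n j \<in> events"
    and small: "eventually (\<lambda>n. J n + 1 \<le> n \<and> (\<forall>j\<le>J n. prob (E n j) \<le> K / real n ^ 3)) sequentially"
  shows "AE \<omega> in M. eventually (\<lambda>n. \<forall>j\<le>J n. \<omega> \<notin> E n j) sequentially"
proof -
  define U where "U n = (\<Union>j\<le>J n. E n j)" for n
  have U_sets: "U n \<in> events" for n unfolding U_def using sets by auto
  have "eventually (\<lambda>n. norm (prob (U n)) \<le> K * real n powr (-2)) sequentially"
    using small eventually_gt_at_top[of "0::nat"]
  proof eventually_elim
    case (elim n)
    have "prob (E n 0) \<le> K / real n ^ 3" using elim(1) by simp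
    then have K: "0 \<le> K / real n ^ 3" using measure_nonneg[of M "E n 0"] by linarith
    have "prob (U n) \<le> (\<Sum>j\<le>J n. prob (E n j))"
      unfolding U_def using sets by (intro finite_measure_subadditive_finite) auto
    also have "\<dots> \<le> (\<Sum>j\<le>J n. K / real n ^ 3)" using elim(1) by (intro sum_mono) auto
    also have "\<dots> = real (J n + 1) * (K / real n ^ 3)" by simp
    also have "\<dots> \<le> real n * (K / real n ^ 3)"
      using elim(1) K by (intro mult_right_mono) linarith+
    also have "\<dots> = K * real n powr (-2)"
      using elim(2) by (simp add: powr_minus_divide powr_realpow power2_eq_square power3_eq_cube)
    finally show ?case by simp
  qed
  moreover have "summable (\<lambda>n. K * real n powr (-2))"
    by (intro summable_mult) (simp add: summable_real_powr_iff)
  ultimately have "summable (\<lambda>n. prob (U n))" by (rule summable_comparison_test_ev)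
  then have "AE \<omega> in M. eventually (\<lambda>n. \<omega> \<in> space M - U n) sequentially"
    by (intro borel_cantelli_AE1 U_sets) (simp_all add: emeasure_eq_measure)
  then show ?thesis
  proof (rule eventually_mono)
    fix \<omega> assume "eventually (\<lambda>n. \<omega> \<in> space M - U n) sequentially"
    then show "eventually (\<lambda>n. \<forall>j\<le>J n. \<omega> \<notin> E n j) sequentially"
      by eventually_elim (simp add: U_def)
  qed
qed

lemma eventually_grid_size_le:
  fixes a :: "nat \<Rightarrow> real"
  assumes a: "eventually (\<lambda>n. a n \<le> A * real n powr (-1/2) * ln (real n) powr (3/4)) sequentially"
    and A: "0 \<le> A"
  shows "eventually (\<lambda>n. nat \<lceil>2 * a n / real n powr (-3/4)\<rceil> + 2 \<le> n) sequentially"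
proof -
  have "eventually (\<lambda>n. 2 * A * real n powr (1/4) * ln (real n) powr (3/4) + 3 \<le> real n) sequentially"
    by real_asymp
  then show ?thesis using a
  proof eventually_elim
    case (elim n)
    have "a n / real n powr (-3/4) = a n * real n powr (3/4)" by (simp add: powr_minus_divide)
    also have "\<dots> \<le> A * real n powr (-1/2) * ln (real n) powr (3/4) * real n powr (3/4)"
      using elim by (intro mult_right_mono) auto
    also have "\<dots> = A * real n powr (1/4) * ln (real n) powr (3/4)"
      by (simp add: powr_add[symmetric] mult_ac)
    finally have r: "2 * a n / real n powr (-3/4) \<le> 2 * A * real n powr (1/4) * ln (real n) powr (3/4)"
      by simp
    have "real (nat \<lceil>2 * a n / real n powr (-3/4)\<rceil>) \<le> 2 * A * real n powr (1/4) * ln (real n) powr (3/4) + 1"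
    proof (cases "0 \<le> \<lceil>2 * a n / real n powr (-3/4)\<rceil>")
      case True
      then show ?thesis using r by (simp add: of_nat_nat) linarith
    qed (use A in simp)
    then show ?case using elim by linarith
  qed
qed

lemma (in real_rv_seq) prob_emp_df_dev_gt_le_prob_count_dev:
  assumes "1 \<le> n" "F \<xi> = p"
  shows "prob {\<omega>\<in>space M. u < \<bar>emp_df X n \<omega> t - F t - (emp_df X n \<omega> \<xi> - p)\<bar>}
    \<le> prob {\<omega>\<in>space M. real n * u \<le> \<bar>count_dev X (min t \<xi>) (max t \<xi>) (F (max t \<xi>) - F (min t \<xi>)) n \<omega>\<bar>}"
proof (rule finite_measure_mono)
  have [measurable]: "X i \<in> borel_measurable M" if "i \<in> {1..n}" for i using random_variable_X that by auto
  show "{\<omega>\<in>space M. real n * u \<le> \<bar>count_dev X (min t \<xi>) (max t \<xi>) (F (max t \<xi>) - F (min t \<xi>)) n \<omega>\<bar>}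
      \<in> events"
    unfolding count_dev_def by measurable
  show "{\<omega>\<in>space M. u < \<bar>emp_df X n \<omega> t - F t - (emp_df X n \<omega> \<xi> - p)\<bar>}
      \<subseteq> {\<omega>\<in>space M. real n * u \<le> \<bar>count_dev X (min t \<xi>) (max t \<xi>) (F (max t \<xi>) - F (min t \<xi>)) n \<omega>\<bar>}"
  proof safe
    fix \<omega> assume "u < \<bar>emp_df X n \<omega> t - F t - (emp_df X n \<omega> \<xi> - p)\<bar>"
    then have "real n * u \<le> real n * \<bar>emp_df X n \<omega> t - F t - (emp_df X n \<omega> \<xi> - p)\<bar>"
      by (intro mult_left_mono) auto
    then show "real n * u \<le> \<bar>count_dev X (min t \<xi>) (max t \<xi>) (F (max t \<xi>) - F (min t \<xi>)) n \<omega>\<bar>"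
      using emp_df_dev_eq_count_dev[where X=X and F=F and \<xi>=\<xi> and p=p, OF assms] by simp
  qed
qed

locale lipschitz_at_quantile = real_rv_seq +
  fixes F :: "real \<Rightarrow> real" and p \<xi> \<epsilon> d :: real
  assumes marg: "\<And>i x. 1 \<le> i \<Longrightarrow> prob {\<omega>\<in>space M. X i \<omega> \<le> x} = F x"
    and F_\<xi>: "F \<xi> = p"
    and lipschitz: "\<And>s t. \<xi> - \<epsilon> \<le> s \<Longrightarrow> s \<le> t \<Longrightarrow> t \<le> \<xi> + \<epsilon> \<Longrightarrow> F t - F s \<le> d * (t - s)"
    and d_nonneg: "0 \<le> d"
begin

lemma mono_F: "mono F"
proof -
  have "F = cdf (distr M borel (X 1))" using marg cdf_distr_eq random_variable_X by simp
  moreover have "finite_borel_measure (distr M borel (X 1))"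
    using random_variable_X[of 1] by (simp add: real_distribution.finite_borel_measure_M)
  ultimately show ?thesis by (simp add: mono_def finite_borel_measure.cdf_nondecreasing)
qed

lemma prob_hit_eq:
  assumes "1 \<le> i" "lo \<le> hi"
  shows "prob (X i -` {lo<..hi} \<inter> space M) = F hi - F lo"
  using measure_vimage_Ioc_eq_cdf_diff[OF random_variable_X[OF assms(1)] assms(2)]
    cdf_distr_eq[OF random_variable_X[OF assms(1)] marg[OF assms(1)]] by simp

lemma eventually_prob_emp_df_dev_gt_le:
  assumes rate: "eventually (\<lambda>n. phi_mix M X n \<le> c * real n powr (-3)) sequentially" and c: "0 \<le> c"
    and sm: "summable (\<lambda>k. phi_mix M X (Suc k))"
    and a: "eventually (\<lambda>n. a n \<le> \<epsilon> \<and> a n \<le> A * real n powr (-1/2) * ln (real n) powr (3/4)) sequentially"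
    and A: "0 \<le> A"
  shows "eventually (\<lambda>n. \<forall>t\<in>{\<xi> - a n..\<xi> + a n}. prob {\<omega>\<in>space M.
      16 * real n powr (-3/4) * ln (real n) < \<bar>emp_df X n \<omega> t - F t - (emp_df X n \<omega> \<xi> - p)\<bar>}
      \<le> 4 * exp (2 * exp 1 * c) / real n ^ 3) sequentially"
  using eventually_prob_count_dev_ge_le[OF rate c sm mult_nonneg_nonneg[OF d_nonneg A]] a
    eventually_ge_at_top[of "1::nat"]
proof eventually_elim
  case (elim n)
  show ?case
  proof
    fix t assume t: "t \<in> {\<xi> - a n..\<xi> + a n}"
    have "F (max t \<xi>) - F (min t \<xi>) \<le> d * (max t \<xi> - min t \<xi>)" using t elim by (intro lipschitz) auto
    also have "\<dots> \<le> d * a n" using t d_nonneg by (intro mult_left_mono) auto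
    also have "\<dots> \<le> d * A * real n powr (-1/2) * ln (real n) powr (3/4)"
      using elim d_nonneg by (simp add: mult.assoc mult_left_mono)
    finally have small: "F (max t \<xi>) - F (min t \<xi>) \<le> d * A * real n powr (-1/2) * ln (real n) powr (3/4)" .
    have "real n * real n powr (-3/4) = real n powr (1/4)" using elim(3) by (subst powr_mult_base) auto
    then have pw: "real n * (16 * real n powr (-3/4) * ln (real n)) = 16 * real n powr (1/4) * ln (real n)"
      by (simp add: algebra_simps)
    have "prob {\<omega>\<in>space M. 16 * real n powr (-3/4) * ln (real n)
        < \<bar>emp_df X n \<omega> t - F t - (emp_df X n \<omega> \<xi> - p)\<bar>}
      \<le> prob {\<omega>\<in>space M. real n * (16 * real n powr (-3/4) * ln (real n))
        \<le> \<bar>count_dev X (min t \<xi>) (max t \<xi>) (F (max t \<xi>) - F (min t \<xi>)) n \<omega>\<bar>}"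
      by (rule prob_emp_df_dev_gt_le_prob_count_dev) (use elim(3) F_\<xi> in auto)
    also have "\<dots> \<le> 4 * exp (2 * exp 1 * c) / real n ^ 3"
      unfolding pw by (rule elim(1)[rule_format]) (use small prob_hit_eq in auto)
    finally show "prob {\<omega>\<in>space M. 16 * real n powr (-3/4) * ln (real n)
        < \<bar>emp_df X n \<omega> t - F t - (emp_df X n \<omega> \<xi> - p)\<bar>} \<le> 4 * exp (2 * exp 1 * c) / real n ^ 3" .
  qed
qed

lemma AE_eventually_emp_df_dev_on_grid_le:
  assumes rate: "eventually (\<lambda>n. phi_mix M X n \<le> c * real n powr (-3)) sequentially" and c: "0 \<le> c"
    and sm: "summable (\<lambda>k. phi_mix M X (Suc k))"
    and a: "eventually (\<lambda>n. 0 < a n \<and> a n \<le> \<epsilon> \<and> a n \<le> A * real n powr (-1/2) * ln (real n) powr (3/4))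
      sequentially"
    and A: "0 \<le> A"
  shows "AE \<omega> in M. eventually (\<lambda>n. \<forall>j \<le> nat \<lceil>2 * a n / real n powr (-3/4)\<rceil> + 1.
      \<bar>emp_df X n \<omega> (grid \<xi> (a n) (real n powr (-3/4)) j) - F (grid \<xi> (a n) (real n powr (-3/4)) j)
        - (emp_df X n \<omega> \<xi> - p)\<bar> \<le> 16 * real n powr (-3/4) * ln (real n)) sequentially"
proof -
  let ?y = "\<lambda>n j. grid \<xi> (a n) (real n powr (-3/4)) j"
  let ?E = "\<lambda>n j. {\<omega>\<in>space M. 16 * real n powr (-3/4) * ln (real n)
    < \<bar>emp_df X n \<omega> (?y n j) - F (?y n j) - (emp_df X n \<omega> \<xi> - p)\<bar>}"
  have a': "eventually (\<lambda>n. a n \<le> \<epsilon> \<and> a n \<le> A * real n powr (-1/2) * ln (real n) powr (3/4)) sequentially"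
    using a by eventually_elim auto
  then have "eventually (\<lambda>n. a n \<le> A * real n powr (-1/2) * ln (real n) powr (3/4)) sequentially"
    by eventually_elim auto
  note grid_size = eventually_grid_size_le[OF this A]
  have "AE \<omega> in M. eventually (\<lambda>n. \<forall>j \<le> nat \<lceil>2 * a n / real n powr (-3/4)\<rceil> + 1. \<omega> \<notin> ?E n j) sequentially"
  proof (rule AE_eventually_notin_of_union_bound)
    show "?E n j \<in> events" for n j by measurable
    show "eventually (\<lambda>n. nat \<lceil>2 * a n / real n powr (-3/4)\<rceil> + 1 + 1 \<le> n \<and>
        (\<forall>j \<le> nat \<lceil>2 * a n / real n powr (-3/4)\<rceil> + 1. prob (?E n j) \<le> 4 * exp (2 * exp 1 * c) / real n ^ 3))
      sequentially"
      using grid_size eventually_prob_emp_df_dev_gt_le[OF rate c sm a' A] a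
    proof eventually_elim
      case (elim n)
      have grid_in: "?y n j \<in> {\<xi> - a n..\<xi> + a n}" for j using elim(3) by (intro grid_mem) auto
      show ?case using elim(1) elim(2)[rule_format, OF grid_in] by simp
    qed
  qed
  then show ?thesis
    using AE_space
  proof eventually_elim
    case (elim \<omega>)
    from elim(1) show ?case by eventually_elim (use elim(2) in \<open>auto simp: not_less\<close>)
  qed
qed

text \<open>The argument yields the constant \<open>16\<close>; the theorem is stated with the weaker \<open>4 C\<^sub>3 \<ge> 16\<close>.\<close>
lemma AE_eventually_sup_emp_df_dev_le:
  assumes rate: "eventually (\<lambda>n. phi_mix M X n \<le> c * real n powr (-3)) sequentially" and c: "0 \<le> c"
    and sm: "summable (\<lambda>k. phi_mix M X (Suc k))"
    and a: "eventually (\<lambda>n. 0 < a n \<and> a n \<le> \<epsilon> \<and> a n \<le> A * real n powr (-1/2) * ln (real n) powr (3/4))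
      sequentially"
    and A: "0 \<le> A" and B: "16 \<le> B"
  shows "AE \<omega> in M. eventually (\<lambda>n. (SUP t\<in>{\<xi> - a n..\<xi> + a n}.
      \<bar>emp_df X n \<omega> t - F t - (emp_df X n \<omega> \<xi> - p)\<bar>) \<le> (d + B) * real n powr (-3/4) * ln (real n)) sequentially"
  using AE_eventually_emp_df_dev_on_grid_le[OF rate c sm a A]
proof (rule eventually_mono)
  fix \<omega>
  assume "eventually (\<lambda>n. \<forall>j \<le> nat \<lceil>2 * a n / real n powr (-3/4)\<rceil> + 1.
      \<bar>emp_df X n \<omega> (grid \<xi> (a n) (real n powr (-3/4)) j) - F (grid \<xi> (a n) (real n powr (-3/4)) j)
        - (emp_df X n \<omega> \<xi> - p)\<bar> \<le> 16 * real n powr (-3/4) * ln (real n)) sequentially"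
  then show "eventually (\<lambda>n. (SUP t\<in>{\<xi> - a n..\<xi> + a n}.
      \<bar>emp_df X n \<omega> t - F t - (emp_df X n \<omega> \<xi> - p)\<bar>) \<le> (d + B) * real n powr (-3/4) * ln (real n)) sequentially"
    using a eventually_ge_at_top[of "3::nat"]
  proof eventually_elim
    case (elim n)
    have "(SUP t\<in>{\<xi> - a n..\<xi> + a n}. \<bar>emp_df X n \<omega> t - F t - (emp_df X n \<omega> \<xi> - p)\<bar>)
        \<le> 16 * real n powr (-3/4) * ln (real n) + d * real n powr (-3/4)"
      using elim by (intro sup_abs_dev_le_grid emp_df_mono mono_F d_nonneg lipschitz) auto
    also have "\<dots> \<le> (d + B) * real n powr (-3/4) * ln (real n)"
    proof -
      have ln: "1 \<le> ln (real n)" using elim(3) exp_le by (simp add: ln_ge_iff)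
      then have "16 * ln (real n) \<le> B * ln (real n)" using B by (intro mult_right_mono) auto
      moreover have "d \<le> d * ln (real n)" using mult_left_mono[OF ln d_nonneg] by simp
      ultimately have le: "16 * ln (real n) + d \<le> (d + B) * ln (real n)" by (simp add: algebra_simps)
      show ?thesis
        using mult_right_mono[OF le powr_ge_zero[of "real n" "-3/4"]] by (simp add: algebra_simps)
    qed
    finally show ?case .
  qed
qed

end

lemma exists_interval_diff_le_of_deriv:
  fixes F f :: "real \<Rightarrow> real"
  assumes "open N" "x \<in> N" and deriv: "\<And>y. y \<in> N \<Longrightarrow> (F has_real_derivative f y) (at y)"
    and bdd: "bdd_above (f ` N)"
  shows "\<exists>\<epsilon>>0. \<forall>s t. x - \<epsilon> \<le> s \<longrightarrow> s \<le> t \<longrightarrow> t \<le> x + \<epsilon> \<longrightarrow> F t - F s \<le> Sup (f ` N) * (t - s)"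
proof -
  obtain \<epsilon> where \<epsilon>: "\<epsilon> > 0" "cball x \<epsilon> \<subseteq> N" using open_contains_cball assms(1,2) by blast
  have sub: "{x - \<epsilon>..x + \<epsilon>} \<subseteq> N"
  proof
    fix y assume "y \<in> {x - \<epsilon>..x + \<epsilon>}"
    then have "y \<in> cball x \<epsilon>" by (simp add: dist_real_def abs_le_iff)
    then show "y \<in> N" using \<epsilon>(2) by blast
  qed
  have f_le: "f y \<le> Sup (f ` N)" if "y \<in> N" for y using that bdd by (intro cSup_upper) auto
  have "F t - F s \<le> Sup (f ` N) * (t - s)" if "x - \<epsilon> \<le> s" "s \<le> t" "t \<le> x + \<epsilon>" for s t
    using sub that by (intro diff_le_of_deriv_le[where a="x - \<epsilon>" and b="x + \<epsilon>" and f=f])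
      (auto simp: subset_eq intro!: f_le deriv)
  then show ?thesis using \<epsilon>(1) by blast
qed

lemma eventually_bounds_of_asymp_equiv:
  fixes a :: "nat \<Rightarrow> real"
  assumes equiv: "a \<sim>[at_top] (\<lambda>n. C0 * real n powr (-1/2) * ln (real n) powr (3/4))"
    and "0 < C0" "0 < \<epsilon>"
  shows "eventually (\<lambda>n. 0 < a n \<and> a n \<le> \<epsilon> \<and> a n \<le> 2 * C0 * real n powr (-1/2) * ln (real n) powr (3/4))
    sequentially"
proof -
  define g where "g n = C0 * real n powr (-1/2) * ln (real n) powr (3/4)" for n :: nat
  have g_pos: "eventually (\<lambda>n. 0 < g n) sequentially" unfolding g_def using assms(2) by real_asymp
  have "(g \<longlongrightarrow> 0) sequentially" unfolding g_def by real_asymp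
  then have small: "eventually (\<lambda>n. g n < \<epsilon> / 2) sequentially" using assms(3) by (intro order_tendstoD) auto
  have "eventually (\<lambda>n. a n \<noteq> 0 \<or> g n \<noteq> 0) sequentially" using g_pos by eventually_elim auto
  then have "((\<lambda>n. a n / g n) \<longlongrightarrow> 1) sequentially"
    by (rule asymp_equivD_strong[OF equiv[folded g_def]])
  then have "eventually (\<lambda>n. 1/2 < a n / g n \<and> a n / g n < 2) sequentially"
    by (intro eventually_conj order_tendstoD) auto
  then show ?thesis using g_pos small
    by eventually_elim (auto simp: g_def field_simps)
qed

theorem theorem2p1:
  fixes M :: "'a measure" and X :: "nat \<Rightarrow> 'a \<Rightarrow> real"
    and F f :: "real \<Rightarrow> real" and p C0 :: real and a :: "nat \<Rightarrow> real"
    and N :: "real set"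
  assumes "prob_space M"
    and rv: "\<And>i. i \<ge> 1 \<Longrightarrow> X i \<in> borel_measurable M"
    and marg: "\<And>i x. i \<ge> 1 \<Longrightarrow> measure M {\<omega> \<in> space M. X i \<omega> \<le> x} = F x"
    and mixing: "decseq (phi_mix M X)" "phi_mix M X \<longlonglongrightarrow> 0"
    and rate: "phi_mix M X \<in> O(\<lambda>n. real n powr (-3))"
    and p: "0 < p" "p < 1"
    and N: "open N" "Inf {x. F x \<ge> p} \<in> N"
    and dens: "\<And>x. x \<in> N \<Longrightarrow> (F has_real_derivative f x) (at x)"
    and fcont: "continuous_on N f" and fpos: "\<And>x. x \<in> N \<Longrightarrow> f x > 0"
    and fbdd: "bdd_above (f ` N)"
    and C0: "C0 > 0"
    and an: "a \<sim>[at_top] (\<lambda>n. C0 * real n powr (-1/2) * ln (real n) powr (3/4))"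
  shows "AE \<omega> in M. eventually (\<lambda>n.
      (SUP x\<in>{Inf {x. F x \<ge> p} - a n .. Inf {x. F x \<ge> p} + a n}.
         \<bar>(emp_df X n \<omega> x - F x) - (emp_df X n \<omega> (Inf {x. F x \<ge> p}) - p)\<bar>)
      \<le> (Sup (f ` N) + 4 * (4 * (1 + 4 * (\<Sum>k. sqrt (phi_mix M X (Suc k))))))
         * real n powr (-3/4) * ln (real n)) sequentially"
proof -
  interpret real_rv_seq M X using assms(1) rv by (simp add: real_rv_seq_def real_rv_seq_axioms_def)
  define \<xi> d where "\<xi> = Inf {x. F x \<ge> p}" and "d = Sup (f ` N)"
  have "F = cdf (distr M borel (X 1))" using marg rv by (intro cdf_distr_eq) auto
  then have F_\<xi>: "F \<xi> = p"
    using real_distribution.cdf_at_quantile[OF _ p] DERIV_isCont[OF dens[OF N(2)]] rv[of 1]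
    unfolding \<xi>_def by simp
  obtain \<epsilon> where "\<epsilon> > 0"
    and lip: "\<forall>s t. \<xi> - \<epsilon> \<le> s \<longrightarrow> s \<le> t \<longrightarrow> t \<le> \<xi> + \<epsilon> \<longrightarrow> F t - F s \<le> d * (t - s)"
    using exists_interval_diff_le_of_deriv[OF N(1) N(2) dens fbdd] unfolding \<xi>_def d_def by blast
  have "0 \<le> d" unfolding d_def using fpos[OF N(2)] cSup_upper[OF imageI[OF N(2)] fbdd] by linarith
  interpret lipschitz_at_quantile M X F p \<xi> \<epsilon> d using marg F_\<xi> lip \<open>0 \<le> d\<close> by unfold_locales auto
  obtain c where c: "0 < c" "eventually (\<lambda>n. phi_mix M X n \<le> c * real n powr (-3)) sequentially"
    using eventually_le_of_bigo_powr_neg3[OF rate phi_mix_nonneg] by blast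
  have "16 \<le> 4 * (4 * (1 + 4 * (\<Sum>k. sqrt (phi_mix M X (Suc k)))))"
    using suminf_nonneg[OF summable_of_bigo_powr_neg3(2)[OF rate phi_mix_nonneg]]
    by (simp add: phi_mix_nonneg)
  from AE_eventually_sup_emp_df_dev_le[OF c(2) _ summable_of_bigo_powr_neg3(1)[OF rate phi_mix_nonneg]
      eventually_bounds_of_asymp_equiv[OF an C0 \<open>\<epsilon> > 0\<close>] _ this] c(1) C0
  show ?thesis unfolding \<xi>_def d_def by simp
qed

end
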